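(* Let $X$, $Y$ be real Banach spaces, $\Omega$ a measure space, $Z:=L^2(\Omega)$, and $e:Y\to Z$ a linear continuous dense embedding. Let $f:X\to\mathbb{R}$ and $g:X\to Y$ be continuously Fréchet differentiable. Let $(x^k)$ be generated by the augmented Lagrangian algorithm described in the context, where in Step 2 the iterate $x^{k+1}$ is chosen such that $L_{\rho_k}'(x^{k+1},w^k)\to 0$ in $X^*$, and assume the penalty sequence $(\rho_k)$ is bounded. If $\bar x$ is a (strong) limit point of $(x^k)$, then $\bar x$ is a KKT point of $\min f(x)$ s.t. $g(x)\le 0$ with a multiplier in $Z$: there exists $\lambda\in Z$ with $\lambda\ge 0$ a.e. such that $f'(\bar x)+g'(\bar x)^*\lambda=0$, $g(\bar x)\le 0$, and $\langle\lambda,g(\bar x)\rangle_Z=0$.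
   Context: The order on $Y$ is induced by $Z$: $y\le 0$ means $e(y)\le 0$ a.e. For $z\in Z$, $z_+:=\max\{z,0\}$ pointwise; $\min$ in $Z$ is pointwise; $g'(x)^*$ denotes the adjoint of $e\circ g'(x):X\to Z$ with $Z\cong Z^*$; $\langle\cdot,\cdot\rangle_Z$ is the $L^2$ inner product. The augmented Lagrangian is $L_\rho(x,\lambda):=f(x)+\frac{\rho}{2}\|(g(x)+\lambda/\rho)_+\|_Z^2$, with $x$-derivative $f'(x)+g'(x)^*(\lambda+\rho g(x))_+$. Algorithm: (S.0) Choose $(x^0,\lambda^0)\in X\times Z$, $\rho_0>0$, $w^{\max}\in Z$ with $w^{\max}\ge 0$, $\gamma>1$, $\tau\in(0,1)$; $k=0$. (S.2) Choose $w^k\in Z$ with $0\le w^k\le w^{\max}$ a.e. and compute an approximate minimizer $x^{k+1}$ of $L_{\rho_k}(\cdot,w^k)$. (S.3) Set $\lambda^{k+1}:=(w^k+\rho_k g(x^{k+1}))_+$. If $k=0$ or $\|\min\{-g(x^{k+1}),w^k/\rho_k\}\|_Z\le\tau\|\min\{-g(x^k),w^{k-1}/\rho_{k-1}\}\|_Z$, set $\rho_{k+1}:=\rho_k$; else $\rho_{k+1}:=\gamma\rho_k$. (S.4) $k\leftarrow k+1$, go to (S.2). The algorithm is run without stopping. *)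

theory Defs
  imports "HOL-Analysis.Analysis"
begin

text \<open>Z = L^2(Omega) modelled concretely: square-integrable real functions on a measure space M,
  with elements identified up to a.e. equality where relevant.\<close>

definition L2 :: "'w measure \<Rightarrow> ('w \<Rightarrow> real) set" where
  "L2 M = {z. z \<in> borel_measurable M \<and> integrable M (\<lambda>\<omega>. (z \<omega>)\<^sup>2)}"

definition L2norm :: "'w measure \<Rightarrow> ('w \<Rightarrow> real) \<Rightarrow> real" where
  "L2norm M z = sqrt (\<integral>\<omega>. (z \<omega>)\<^sup>2 \<partial>M)"

definition L2inner :: "'w measure \<Rightarrow> ('w \<Rightarrow> real) \<Rightarrow> ('w \<Rightarrow> real) \<Rightarrow> real" where
  "L2inner M u v = (\<integral>\<omega>. u \<omega> * v \<omega> \<partial>M)"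

definition dense_L2_embedding :: "'w measure \<Rightarrow> ('y::real_normed_vector \<Rightarrow> ('w \<Rightarrow> real)) \<Rightarrow> bool" where
  "dense_L2_embedding M e \<longleftrightarrow>
     (\<forall>y. e y \<in> L2 M) \<and>
     (\<forall>a b y1 y2. AE \<omega> in M. e (a *\<^sub>R y1 + b *\<^sub>R y2) \<omega> = a * e y1 \<omega> + b * e y2 \<omega>) \<and>
     (\<exists>C. \<forall>y. L2norm M (e y) \<le> C * norm y) \<and>
     (\<forall>y. (AE \<omega> in M. e y \<omega> = 0) \<longrightarrow> y = 0) \<and>
     (\<forall>z\<in>L2 M. \<forall>\<epsilon>>0. \<exists>y. L2norm M (\<lambda>\<omega>. e y \<omega> - z \<omega>) < \<epsilon>)"

definition C1_Frechet :: "('a::real_normed_vector \<Rightarrow> 'b::real_normed_vector) \<Rightarrow> ('a \<Rightarrow> ('a \<Rightarrow>\<^sub>L 'b)) \<Rightarrow> bool" where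
  "C1_Frechet F F' \<longleftrightarrow> (\<forall>x. (F has_derivative blinfun_apply (F' x)) (at x)) \<and> continuous_on UNIV F'"

definition AL_deriv ::
  "'w measure \<Rightarrow> ('y::real_normed_vector \<Rightarrow> ('w \<Rightarrow> real)) \<Rightarrow> ('x::real_normed_vector \<Rightarrow> ('x \<Rightarrow>\<^sub>L real)) \<Rightarrow> ('x \<Rightarrow> 'y) \<Rightarrow> ('x \<Rightarrow> ('x \<Rightarrow>\<^sub>L 'y))
    \<Rightarrow> real \<Rightarrow> 'x \<Rightarrow> ('w \<Rightarrow> real) \<Rightarrow> ('x \<Rightarrow> real)" where
  "AL_deriv M e f' g g' \<rho> x lam =
     (\<lambda>d. blinfun_apply (f' x) d
          + L2inner M (\<lambda>\<omega>. max (lam \<omega> + \<rho> * e (g x) \<omega>) 0) (e (blinfun_apply (g' x) d)))"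

end

theory Submission
  imports Defs
begin

(* Bounded penalties are eventually constant, so the test in (S.3) eventually always succeeds
   and the residual r_k = min(-g(x^{k+1}), w^k / rho_k) decays geometrically in L2.
   Pointwise, r_k dominates the constraint violation g(x^{k+1})_+ and satisfies
   |lambda^{k+1} g(x^{k+1})| <= lambda^{k+1} |r_k| for lambda^{k+1} = (w^k + rho_k g(x^{k+1}))_+,
   so along a subsequence with x^{k+1} -> xbar the points are asymptotically feasible and
   complementary, and the multipliers lambda^{k+1} stay bounded in L2.  The KKT multiplier is a
   weak limit of the lambda^{k+1}.  As L2 M is modelled as a set of functions rather than as a
   Hilbert space, the weak limit is built by hand: nearly norm-minimal convex combinations of the
   tails lambda^{n+1}, lambda^{n+2}, ... form a Cauchy sequence by the parallelogram law, and
   their strong limit (L2 is complete by the Riesz-Fischer argument) pairs with every test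
   function like the limit of the pairings with lambda^{k+1}. *)

section \<open>Square-integrable functions\<close>

definition L2sqnorm :: "'w measure \<Rightarrow> ('w \<Rightarrow> real) \<Rightarrow> real" where
  "L2sqnorm M z = (\<integral>\<omega>. (z \<omega>)\<^sup>2 \<partial>M)"

lemma L2_measurable: "u \<in> L2 M \<Longrightarrow> u \<in> borel_measurable M"
  by (simp add: L2_def)

lemma L2_integrable_power2: "u \<in> L2 M \<Longrightarrow> integrable M (\<lambda>\<omega>. (u \<omega>)\<^sup>2)"
  by (simp add: L2_def)

lemma L2sqnorm_nonneg: "L2sqnorm M u \<ge> 0"
  unfolding L2sqnorm_def by (rule integral_nonneg_AE) auto

lemma L2norm_eq_sqrt: "L2norm M u = sqrt (L2sqnorm M u)"
  by (simp add: L2norm_def L2sqnorm_def)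

lemma power2_L2norm: "(L2norm M u)\<^sup>2 = L2sqnorm M u"
  by (simp add: L2norm_eq_sqrt L2sqnorm_nonneg)

lemma L2norm_nonneg: "L2norm M u \<ge> 0"
  by (simp add: L2norm_eq_sqrt L2sqnorm_nonneg)

lemma L2sqnorm_diff_commute: "L2sqnorm M (\<lambda>\<omega>. u \<omega> - v \<omega>) = L2sqnorm M (\<lambda>\<omega>. v \<omega> - u \<omega>)"
  by (simp add: L2sqnorm_def power2_commute)

lemma nn_integral_power2_eq_L2sqnorm:
  "u \<in> L2 M \<Longrightarrow> (\<integral>\<^sup>+\<omega>. ennreal ((u \<omega>)\<^sup>2) \<partial>M) = ennreal (L2sqnorm M u)"
  unfolding L2sqnorm_def by (intro nn_integral_eq_integral L2_integrable_power2) auto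

lemma L2_dominated:
  assumes u: "u \<in> L2 M" and v[measurable]: "v \<in> borel_measurable M"
    and le: "AE \<omega> in M. \<bar>v \<omega>\<bar> \<le> \<bar>u \<omega>\<bar>"
  shows "v \<in> L2 M" "L2sqnorm M v \<le> L2sqnorm M u"
proof -
  have le2: "AE \<omega> in M. (v \<omega>)\<^sup>2 \<le> (u \<omega>)\<^sup>2"
    using le by eventually_elim (simp add: abs_le_square_iff)
  have "integrable M (\<lambda>\<omega>. (v \<omega>)\<^sup>2)"
    by (rule Bochner_Integration.integrable_bound[OF L2_integrable_power2[OF u]])
       (use le2 in auto)
  then show "v \<in> L2 M" by (simp add: L2_def)
  show "L2sqnorm M v \<le> L2sqnorm M u" unfolding L2sqnorm_def
    using le2 \<open>integrable M (\<lambda>\<omega>. (v \<omega>)\<^sup>2)\<close> L2_integrable_power2[OF u]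
    by (intro integral_mono_AE) auto
qed

lemma integrable_L2_mult:
  assumes u: "u \<in> L2 M" and v: "v \<in> L2 M"
  shows "integrable M (\<lambda>\<omega>. u \<omega> * v \<omega>)"
proof (rule Bochner_Integration.integrable_bound)
  show "integrable M (\<lambda>\<omega>. (u \<omega>)\<^sup>2 + (v \<omega>)\<^sup>2)"
    using L2_integrable_power2[OF u] L2_integrable_power2[OF v] by simp
  show "(\<lambda>\<omega>. u \<omega> * v \<omega>) \<in> borel_measurable M"
    using L2_measurable[OF u] L2_measurable[OF v] by measurable
  show "AE \<omega> in M. norm (u \<omega> * v \<omega>) \<le> norm ((u \<omega>)\<^sup>2 + (v \<omega>)\<^sup>2)"
  proof (intro AE_I2)
    fix \<omega>
    have "2 * \<bar>u \<omega>\<bar> * \<bar>v \<omega>\<bar> \<le> \<bar>u \<omega>\<bar>\<^sup>2 + \<bar>v \<omega>\<bar>\<^sup>2"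
      by (rule sum_squares_bound)
    moreover have "0 \<le> \<bar>u \<omega>\<bar> * \<bar>v \<omega>\<bar>" by simp
    ultimately have "\<bar>u \<omega>\<bar> * \<bar>v \<omega>\<bar> \<le> \<bar>u \<omega>\<bar>\<^sup>2 + \<bar>v \<omega>\<bar>\<^sup>2" by linarith
    then show "norm (u \<omega> * v \<omega>) \<le> norm ((u \<omega>)\<^sup>2 + (v \<omega>)\<^sup>2)"
      by (simp add: abs_mult)
  qed
qed

lemma L2_add:
  assumes u: "u \<in> L2 M" and v: "v \<in> L2 M"
  shows "(\<lambda>\<omega>. u \<omega> + v \<omega>) \<in> L2 M"
proof -
  have "integrable M (\<lambda>\<omega>. (u \<omega>)\<^sup>2 + (v \<omega>)\<^sup>2 + 2 * (u \<omega> * v \<omega>))"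
    using L2_integrable_power2[OF u] L2_integrable_power2[OF v] integrable_L2_mult[OF u v] by simp
  moreover have "(\<lambda>\<omega>. u \<omega> + v \<omega>) \<in> borel_measurable M"
    using L2_measurable[OF u] L2_measurable[OF v] by measurable
  ultimately show ?thesis by (simp add: L2_def power2_sum mult.assoc)
qed

lemma L2_cmult: "u \<in> L2 M \<Longrightarrow> (\<lambda>\<omega>. c * u \<omega>) \<in> L2 M"
  unfolding L2_def by (auto simp: power_mult_distrib)

lemma L2_divide: "u \<in> L2 M \<Longrightarrow> (\<lambda>\<omega>. u \<omega> / c) \<in> L2 M"
  using L2_cmult[of u M "inverse c"] by (simp add: divide_inverse mult.commute)

lemma L2_uminus: "u \<in> L2 M \<Longrightarrow> (\<lambda>\<omega>. - u \<omega>) \<in> L2 M"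
  unfolding L2_def by auto

lemma L2_diff: "u \<in> L2 M \<Longrightarrow> v \<in> L2 M \<Longrightarrow> (\<lambda>\<omega>. u \<omega> - v \<omega>) \<in> L2 M"
  using L2_add[of u M "\<lambda>\<omega>. - v \<omega>"] L2_uminus[of v M] by simp

lemma L2_abs: "u \<in> L2 M \<Longrightarrow> (\<lambda>\<omega>. \<bar>u \<omega>\<bar>) \<in> L2 M"
  by (rule L2_dominated(1)) (auto dest: L2_measurable)

lemma L2_max_0: "u \<in> L2 M \<Longrightarrow> (\<lambda>\<omega>. max (u \<omega>) 0) \<in> L2 M"
  by (rule L2_dominated(1)) (auto dest: L2_measurable)

lemma L2_min:
  assumes u: "u \<in> L2 M" and v: "v \<in> L2 M"
  shows "(\<lambda>\<omega>. min (u \<omega>) (v \<omega>)) \<in> L2 M"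
  using L2_measurable[OF u] L2_measurable[OF v]
  by (intro L2_dominated(1)[OF L2_add[OF L2_abs[OF u] L2_abs[OF v]]]) auto

lemma L2_sum: "(\<And>i. i \<in> I \<Longrightarrow> u i \<in> L2 M) \<Longrightarrow> (\<lambda>\<omega>. \<Sum>i\<in>I. u i \<omega>) \<in> L2 M"
proof (induction I rule: infinite_finite_induct)
  case (insert i I)
  then show ?case using L2_add[of "u i" M "\<lambda>\<omega>. \<Sum>i\<in>I. u i \<omega>"] by simp
qed (simp_all add: L2_def)

lemma L2inner_diff_left:
  assumes "u \<in> L2 M" "v \<in> L2 M" "a \<in> L2 M"
  shows "L2inner M (\<lambda>\<omega>. u \<omega> - v \<omega>) a = L2inner M u a - L2inner M v a"
  unfolding L2inner_def using integrable_L2_mult[OF assms(1,3)] integrable_L2_mult[OF assms(2,3)]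
  by (simp add: left_diff_distrib)

lemma L2inner_diff_right:
  assumes "u \<in> L2 M" "a \<in> L2 M" "b \<in> L2 M"
  shows "L2inner M u (\<lambda>\<omega>. a \<omega> - b \<omega>) = L2inner M u a - L2inner M u b"
  unfolding L2inner_def using integrable_L2_mult[OF assms(1,2)] integrable_L2_mult[OF assms(1,3)]
  by (simp add: right_diff_distrib)

lemma L2inner_sum_left:
  assumes u: "\<And>k. u k \<in> L2 M" and a: "a \<in> L2 M"
  shows "L2inner M (\<lambda>\<omega>. \<Sum>k\<in>I. c k * u k \<omega>) a = (\<Sum>k\<in>I. c k * L2inner M (u k) a)"
proof -
  have "L2inner M (\<lambda>\<omega>. \<Sum>k\<in>I. c k * u k \<omega>) a = (\<integral>\<omega>. (\<Sum>k\<in>I. c k * (u k \<omega> * a \<omega>)) \<partial>M)"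
    unfolding L2inner_def by (simp add: sum_distrib_right mult.assoc)
  also have "\<dots> = (\<Sum>k\<in>I. (\<integral>\<omega>. c k * (u k \<omega> * a \<omega>) \<partial>M))"
    by (rule Bochner_Integration.integral_sum) (use integrable_L2_mult[OF u a] in simp)
  also have "\<dots> = (\<Sum>k\<in>I. c k * L2inner M (u k) a)"
    by (simp add: L2inner_def)
  finally show ?thesis .
qed

lemma L2inner_abs_le:
  assumes u: "u \<in> L2 M" and v: "v \<in> L2 M"
  shows "\<bar>L2inner M u v\<bar> \<le> L2norm M u * L2norm M v"
proof -
  note [measurable] = L2_measurable[OF u] L2_measurable[OF v]
  have abs_uv: "integrable M (\<lambda>\<omega>. \<bar>u \<omega> * v \<omega>\<bar>)"
    using integrable_L2_mult[OF u v] by simp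
  have "ennreal ((\<integral>\<omega>. \<bar>u \<omega> * v \<omega>\<bar> \<partial>M)\<^sup>2)
      = (\<integral>\<^sup>+\<omega>. ennreal \<bar>u \<omega>\<bar> * ennreal \<bar>v \<omega>\<bar> \<partial>M)\<^sup>2"
    using abs_uv by (simp add: nn_integral_eq_integral ennreal_power abs_mult flip: ennreal_mult)
  also have "\<dots> \<le> (\<integral>\<^sup>+\<omega>. ennreal \<bar>u \<omega>\<bar> ^ 2 \<partial>M) * (\<integral>\<^sup>+\<omega>. ennreal \<bar>v \<omega>\<bar> ^ 2 \<partial>M)"
    by (rule Cauchy_Schwarz_nn_integral) auto
  also have "\<dots> = ennreal (L2sqnorm M u * L2sqnorm M v)"
    using nn_integral_power2_eq_L2sqnorm[OF u] nn_integral_power2_eq_L2sqnorm[OF v]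
    by (simp add: ennreal_power ennreal_mult L2sqnorm_nonneg)
  finally have "(\<integral>\<omega>. \<bar>u \<omega> * v \<omega>\<bar> \<partial>M)\<^sup>2 \<le> L2sqnorm M u * L2sqnorm M v"
    by (simp add: ennreal_le_iff L2sqnorm_nonneg)
  then have "(\<integral>\<omega>. \<bar>u \<omega> * v \<omega>\<bar> \<partial>M) \<le> L2norm M u * L2norm M v"
    by (simp add: L2norm_eq_sqrt real_le_rsqrt flip: real_sqrt_mult)
  then show ?thesis
    unfolding L2inner_def using integral_abs_bound[of M "\<lambda>\<omega>. u \<omega> * v \<omega>"] by linarith
qed

lemma AE_zero_of_L2sqnorm_le_0:
  assumes u: "u \<in> L2 M" and "L2sqnorm M u \<le> 0"
  shows "AE \<omega> in M. u \<omega> = 0"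
proof -
  have "(\<integral>\<omega>. (u \<omega>)\<^sup>2 \<partial>M) = 0"
    using assms(2) L2sqnorm_nonneg[of M u] unfolding L2sqnorm_def by linarith
  then have "AE \<omega> in M. (u \<omega>)\<^sup>2 = 0"
    using L2_integrable_power2[OF u] by (subst (asm) integral_nonneg_eq_0_iff_AE) auto
  then show ?thesis by simp
qed

lemma L2sqnorm_le_sum:
  assumes a[measurable]: "a \<in> borel_measurable M" and b: "b \<in> L2 M" and c: "c \<in> L2 M"
    and le: "AE \<omega> in M. \<bar>a \<omega>\<bar> \<le> \<bar>b \<omega>\<bar> + \<bar>c \<omega>\<bar>"
  shows "L2sqnorm M a \<le> 2 * L2sqnorm M b + 2 * L2sqnorm M c"
proof -
  have bc: "(\<lambda>\<omega>. \<bar>b \<omega>\<bar> + \<bar>c \<omega>\<bar>) \<in> L2 M" by (intro L2_add L2_abs b c)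
  have "L2sqnorm M a \<le> L2sqnorm M (\<lambda>\<omega>. \<bar>b \<omega>\<bar> + \<bar>c \<omega>\<bar>)"
    by (rule L2_dominated(2)[OF bc a]) (use le in \<open>auto elim!: eventually_mono\<close>)
  also have "\<dots> \<le> (\<integral>\<omega>. 2 * (b \<omega>)\<^sup>2 + 2 * (c \<omega>)\<^sup>2 \<partial>M)"
    unfolding L2sqnorm_def
  proof (rule integral_mono)
    show "integrable M (\<lambda>\<omega>. (\<bar>b \<omega>\<bar> + \<bar>c \<omega>\<bar>)\<^sup>2)" using L2_integrable_power2[OF bc] .
    show "integrable M (\<lambda>\<omega>. 2 * (b \<omega>)\<^sup>2 + 2 * (c \<omega>)\<^sup>2)"
      using L2_integrable_power2[OF b] L2_integrable_power2[OF c] by simp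
    show "(\<bar>b \<omega>\<bar> + \<bar>c \<omega>\<bar>)\<^sup>2 \<le> 2 * (b \<omega>)\<^sup>2 + 2 * (c \<omega>)\<^sup>2" for \<omega>
      using sum_squares_bound[of "\<bar>b \<omega>\<bar>" "\<bar>c \<omega>\<bar>"] by (simp add: power2_sum)
  qed
  also have "\<dots> = 2 * L2sqnorm M b + 2 * L2sqnorm M c"
    unfolding L2sqnorm_def using L2_integrable_power2[OF b] L2_integrable_power2[OF c] by simp
  finally show ?thesis .
qed

lemma L2sqnorm_parallelogram:
  assumes z: "z \<in> L2 M" and y: "y \<in> L2 M"
  shows "L2sqnorm M (\<lambda>\<omega>. z \<omega> - y \<omega>) + 4 * L2sqnorm M (\<lambda>\<omega>. (z \<omega> + y \<omega>) / 2)
    = 2 * L2sqnorm M z + 2 * L2sqnorm M y"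
proof -
  have mid: "(\<lambda>\<omega>. (z \<omega> + y \<omega>) / 2) \<in> L2 M" by (intro L2_divide L2_add z y)
  have "L2sqnorm M (\<lambda>\<omega>. z \<omega> - y \<omega>) + 4 * L2sqnorm M (\<lambda>\<omega>. (z \<omega> + y \<omega>) / 2)
      = (\<integral>\<omega>. (z \<omega> - y \<omega>)\<^sup>2 + 4 * ((z \<omega> + y \<omega>) / 2)\<^sup>2 \<partial>M)"
    unfolding L2sqnorm_def
    using L2_integrable_power2[OF L2_diff[OF z y]] L2_integrable_power2[OF mid] by simp
  also have "\<dots> = (\<integral>\<omega>. 2 * (z \<omega>)\<^sup>2 + 2 * (y \<omega>)\<^sup>2 \<partial>M)"
    by (rule Bochner_Integration.integral_cong) (simp_all add: power2_eq_square field_simps)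
  also have "\<dots> = 2 * L2sqnorm M z + 2 * L2sqnorm M y"
    unfolding L2sqnorm_def using L2_integrable_power2[OF z] L2_integrable_power2[OF y] by simp
  finally show ?thesis .
qed

lemma summable_of_summable_weighted_power2:
  fixes d :: "nat \<Rightarrow> real"
  assumes "summable (\<lambda>i. 2^i * (d i)\<^sup>2)"
  shows "summable d"
proof -
  have bound: "norm (d i) \<le> (1/2)^i + 2^i * (d i)\<^sup>2" for i
  proof (cases "\<bar>d i\<bar> \<le> (1/2)^i")
    case False
    then have "1 < 2^i * \<bar>d i\<bar>" by (simp add: power_one_over field_simps)
    moreover have "0 < \<bar>d i\<bar>" using False zero_le_power[of "1/2::real" i] by linarith
    ultimately have "1 * \<bar>d i\<bar> < (2^i * \<bar>d i\<bar>) * \<bar>d i\<bar>" by (rule mult_strict_right_mono)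
    then have "\<bar>d i\<bar> < 2^i * (d i)\<^sup>2" by (simp add: power2_eq_square mult.assoc)
    then show ?thesis unfolding real_norm_def using zero_le_power[of "1/2::real" i] by linarith
  qed (simp add: add_increasing2)
  have "summable (\<lambda>i. (1/2::real)^i + 2^i * (d i)\<^sup>2)"
    by (intro summable_add assms) simp
  then have "summable (\<lambda>i. norm (d i))"
    by (rule summable_comparison_test'[where N=0]) (use bound in simp)
  then show ?thesis by (rule summable_norm_cancel)
qed

section \<open>Completeness of L2\<close>

(* The weights 2^i keep the integral of sum_i 2^i (s (Suc i) - s i)^2 finite, so the sum is
   finite a.e., which forces a.e. absolute convergence of the telescoping series. *)
lemma L2_fast_Cauchy_AE_convergent:
  assumes s: "\<And>i. s i \<in> L2 M"
    and fast: "\<And>i. L2sqnorm M (\<lambda>\<omega>. s (Suc i) \<omega> - s i \<omega>) \<le> (1/8)^i"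
  shows "AE \<omega> in M. convergent (\<lambda>i. s i \<omega>)"
proof -
  define d where "d i = (\<lambda>\<omega>. s (Suc i) \<omega> - s i \<omega>)" for i
  have d: "d i \<in> L2 M" for i unfolding d_def by (intro L2_diff s)
  note [measurable] = L2_measurable[OF d]
  have "(\<integral>\<^sup>+\<omega>. ennreal (2^i * (d i \<omega>)\<^sup>2) \<partial>M) \<le> ennreal ((1/4)^i)" for i
  proof -
    have "(\<integral>\<^sup>+\<omega>. ennreal (2^i * (d i \<omega>)\<^sup>2) \<partial>M) = ennreal (2^i) * (\<integral>\<^sup>+\<omega>. ennreal ((d i \<omega>)\<^sup>2) \<partial>M)"
      by (simp add: ennreal_mult nn_integral_cmult ennreal_power)
    also have "\<dots> = ennreal (2^i * L2sqnorm M (d i))"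
      by (simp add: nn_integral_power2_eq_L2sqnorm[OF d] L2sqnorm_nonneg flip: ennreal_mult)
    also have "2^i * L2sqnorm M (d i) \<le> (2::real)^i * (1/8)^i"
      using fast[of i] by (simp add: d_def)
    also have "\<dots> = (1/4)^i" by (simp flip: power_mult_distrib)
    finally show ?thesis by (simp add: ennreal_leI)
  qed
  then have "(\<integral>\<^sup>+\<omega>. (\<Sum>i. ennreal (2^i * (d i \<omega>)\<^sup>2)) \<partial>M) \<le> (\<Sum>i. ennreal ((1/4)^i))"
    by (subst nn_integral_suminf) (auto intro: suminf_le)
  also have "\<dots> = ennreal (\<Sum>i. (1/4)^i)" by (intro suminf_ennreal2) auto
  also have "\<dots> < \<infinity>" by simp
  finally have "AE \<omega> in M. (\<Sum>i. ennreal (2^i * (d i \<omega>)\<^sup>2)) < \<infinity>"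
    by (rule finite_nn_integral_imp_ae_finite[rotated]) measurable
  then show ?thesis
  proof eventually_elim
    case (elim \<omega>)
    then have "summable (\<lambda>i. 2^i * (d i \<omega>)\<^sup>2)"
      by (intro summable_suminf_not_top) (simp_all add: less_top)
    then have "summable (\<lambda>i. d i \<omega>)"
      by (rule summable_of_summable_weighted_power2)
    then have "convergent (\<lambda>n. \<Sum>i<n. d i \<omega>)"
      by (rule convergentI[OF summable_LIMSEQ])
    moreover have "(\<Sum>i<n. d i \<omega>) = s n \<omega> - s 0 \<omega>" for n
      unfolding d_def by (rule sum_lessThan_telescope)
    ultimately show ?case by (simp add: convergent_diff_const_right_iff)
  qed
qed

lemma L2_limit_diff_le:
  assumes z: "z \<in> L2 M" and s: "\<And>i. s i \<in> L2 M" and v[measurable]: "v \<in> borel_measurable M"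
    and lim: "AE \<omega> in M. (\<lambda>i. s i \<omega>) \<longlonglongrightarrow> v \<omega>"
    and ev: "eventually (\<lambda>i. L2sqnorm M (\<lambda>\<omega>. z \<omega> - s i \<omega>) \<le> \<epsilon>) sequentially"
  shows "(\<lambda>\<omega>. z \<omega> - v \<omega>) \<in> L2 M" "L2sqnorm M (\<lambda>\<omega>. z \<omega> - v \<omega>) \<le> \<epsilon>"
proof -
  note [measurable] = L2_measurable[OF z] L2_measurable[OF s]
  obtain i where "L2sqnorm M (\<lambda>\<omega>. z \<omega> - s i \<omega>) \<le> \<epsilon>"
    using eventually_happens'[OF sequentially_bot ev] by blast
  then have "\<epsilon> \<ge> 0" using L2sqnorm_nonneg order_trans by blast
  have "(\<integral>\<^sup>+\<omega>. ennreal ((z \<omega> - v \<omega>)\<^sup>2) \<partial>M)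
      = (\<integral>\<^sup>+\<omega>. liminf (\<lambda>i. ennreal ((z \<omega> - s i \<omega>)\<^sup>2)) \<partial>M)"
  proof (intro nn_integral_cong_AE)
    show "AE \<omega> in M. ennreal ((z \<omega> - v \<omega>)\<^sup>2) = liminf (\<lambda>i. ennreal ((z \<omega> - s i \<omega>)\<^sup>2))"
      using lim
    proof eventually_elim
      case (elim \<omega>)
      then have "(\<lambda>i. ennreal ((z \<omega> - s i \<omega>)\<^sup>2)) \<longlonglongrightarrow> ennreal ((z \<omega> - v \<omega>)\<^sup>2)"
        by (intro tendsto_ennrealI tendsto_intros)
      then show ?case by (rule lim_imp_Liminf[OF sequentially_bot, symmetric])
    qed
  qed
  also have "\<dots> \<le> liminf (\<lambda>i. \<integral>\<^sup>+\<omega>. ennreal ((z \<omega> - s i \<omega>)\<^sup>2) \<partial>M)"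
    by (intro nn_integral_liminf) measurable
  also have "\<dots> = liminf (\<lambda>i. ennreal (L2sqnorm M (\<lambda>\<omega>. z \<omega> - s i \<omega>)))"
    using nn_integral_power2_eq_L2sqnorm[OF L2_diff[OF z s]] by simp
  also have "\<dots> \<le> liminf (\<lambda>_. ennreal \<epsilon>)"
    using ev by (intro Liminf_mono) (auto elim!: eventually_mono intro: ennreal_leI)
  also have "\<dots> = ennreal \<epsilon>" by (simp add: Liminf_const)
  finally have bound: "(\<integral>\<^sup>+\<omega>. ennreal ((z \<omega> - v \<omega>)\<^sup>2) \<partial>M) \<le> ennreal \<epsilon>" .
  have "integrable M (\<lambda>\<omega>. (z \<omega> - v \<omega>)\<^sup>2)"
    using bound by (intro integrableI_bounded) (auto simp: order_le_less_trans)
  then show L2: "(\<lambda>\<omega>. z \<omega> - v \<omega>) \<in> L2 M" by (simp add: L2_def)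
  show "L2sqnorm M (\<lambda>\<omega>. z \<omega> - v \<omega>) \<le> \<epsilon>"
    using bound \<open>\<epsilon> \<ge> 0\<close> by (simp add: nn_integral_power2_eq_L2sqnorm[OF L2])
qed

lemma Cauchy_fast_subseq:
  fixes d :: "nat \<Rightarrow> nat \<Rightarrow> real"
  assumes Cauchy: "\<And>\<epsilon>. \<epsilon> > 0 \<Longrightarrow> \<exists>N. \<forall>n\<ge>N. \<forall>m\<ge>N. d n m < \<epsilon>" and pos: "\<And>k. a k > 0"
  shows "\<exists>r. strict_mono r \<and> (\<forall>k. d (r (Suc k)) (r k) < a k)"
proof -
  have "\<exists>N. \<forall>n\<ge>N. \<forall>m\<ge>N. d n m < a k" for k by (rule Cauchy[OF pos])
  then obtain N where N: "\<And>k n m. n \<ge> N k \<Longrightarrow> m \<ge> N k \<Longrightarrow> d n m < a k" by metis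
  define r where "r = rec_nat (N 0) (\<lambda>k rk. max (Suc rk) (N (Suc k)))"
  have r_Suc: "r (Suc k) = max (Suc (r k)) (N (Suc k))" for k by (simp add: r_def)
  have r_ge: "r k \<ge> N k" for k by (cases k) (simp_all add: r_def)
  have r_step: "r k \<le> r (Suc k)" for k by (simp add: r_Suc)
  have "strict_mono r" by (simp add: strict_mono_Suc_iff r_Suc less_max_iff_disj)
  moreover have "d (r (Suc k)) (r k) < a k" for k
    by (rule N[OF order_trans[OF r_ge r_step] r_ge])
  ultimately show ?thesis by blast
qed

lemma L2_tendsto_of_Cauchy_AE_subseq:
  assumes s: "\<And>n. s n \<in> L2 M"
    and Cauchy: "\<And>\<epsilon>. \<epsilon> > 0 \<Longrightarrow> \<exists>N. \<forall>n\<ge>N. \<forall>m\<ge>N. L2sqnorm M (\<lambda>\<omega>. s n \<omega> - s m \<omega>) < \<epsilon>"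
    and r: "strict_mono r" and v: "v \<in> borel_measurable M"
    and lim: "AE \<omega> in M. (\<lambda>i. s (r i) \<omega>) \<longlonglongrightarrow> v \<omega>"
  shows "v \<in> L2 M" "(\<lambda>n. L2sqnorm M (\<lambda>\<omega>. s n \<omega> - v \<omega>)) \<longlonglongrightarrow> 0"
proof -
  have close: "\<exists>N. \<forall>n\<ge>N. (\<lambda>\<omega>. s n \<omega> - v \<omega>) \<in> L2 M \<and> L2sqnorm M (\<lambda>\<omega>. s n \<omega> - v \<omega>) \<le> \<epsilon>"
    if \<epsilon>: "\<epsilon> > 0" for \<epsilon>
  proof -
    obtain K where K: "\<And>n m. n \<ge> K \<Longrightarrow> m \<ge> K \<Longrightarrow> L2sqnorm M (\<lambda>\<omega>. s n \<omega> - s m \<omega>) < \<epsilon>"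
      using Cauchy[OF \<epsilon>] by blast
    have "L2sqnorm M (\<lambda>\<omega>. s n \<omega> - s (r i) \<omega>) \<le> \<epsilon>" if "n \<ge> K" "i \<ge> K" for n i
      using K[OF that(1) order_trans[OF that(2) strict_mono_imp_increasing[OF r]]] by simp
    then have "eventually (\<lambda>i. L2sqnorm M (\<lambda>\<omega>. s n \<omega> - s (r i) \<omega>) \<le> \<epsilon>) sequentially"
      if "n \<ge> K" for n
      using that unfolding eventually_sequentially by blast
    then show ?thesis
      using L2_limit_diff_le[OF s s v lim] by blast
  qed
  obtain K where "(\<lambda>\<omega>. s K \<omega> - v \<omega>) \<in> L2 M" using close[of 1] by auto
  from L2_diff[OF s[of K] this] show "v \<in> L2 M" by simp
  show "(\<lambda>n. L2sqnorm M (\<lambda>\<omega>. s n \<omega> - v \<omega>)) \<longlonglongrightarrow> 0"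
  proof (rule LIMSEQ_I)
    fix \<epsilon> :: real assume "\<epsilon> > 0"
    then obtain K where K: "\<And>n. n \<ge> K \<Longrightarrow> L2sqnorm M (\<lambda>\<omega>. s n \<omega> - v \<omega>) \<le> \<epsilon> / 2"
      using close[OF half_gt_zero] by blast
    have "norm (L2sqnorm M (\<lambda>\<omega>. s n \<omega> - v \<omega>) - 0) < \<epsilon>" if "n \<ge> K" for n
      using K[OF that] \<open>\<epsilon> > 0\<close> L2sqnorm_nonneg[of M "\<lambda>\<omega>. s n \<omega> - v \<omega>"] by (simp add: abs_of_nonneg)
    then show "\<exists>K. \<forall>n\<ge>K. norm (L2sqnorm M (\<lambda>\<omega>. s n \<omega> - v \<omega>) - 0) < \<epsilon>" by blast
  qed
qed

lemma L2_complete: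
  assumes s: "\<And>n. s n \<in> L2 M"
    and Cauchy: "\<And>\<epsilon>. \<epsilon> > 0 \<Longrightarrow> \<exists>N. \<forall>n\<ge>N. \<forall>m\<ge>N. L2sqnorm M (\<lambda>\<omega>. s n \<omega> - s m \<omega>) < \<epsilon>"
  obtains v r where "v \<in> L2 M" "strict_mono r" "AE \<omega> in M. (\<lambda>i. s (r i) \<omega>) \<longlonglongrightarrow> v \<omega>"
    "(\<lambda>n. L2sqnorm M (\<lambda>\<omega>. s n \<omega> - v \<omega>)) \<longlonglongrightarrow> 0"
proof -
  have "(1/8::real)^k > 0" for k by simp
  from Cauchy_fast_subseq[where d="\<lambda>n m. L2sqnorm M (\<lambda>\<omega>. s n \<omega> - s m \<omega>)"
      and a="\<lambda>k. (1/8)^k", OF Cauchy this]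
  obtain r where r: "strict_mono r"
    and fast: "\<And>k. L2sqnorm M (\<lambda>\<omega>. s (r (Suc k)) \<omega> - s (r k) \<omega>) < (1/8)^k"
    by blast
  have "AE \<omega> in M. convergent (\<lambda>i. s (r i) \<omega>)"
    by (rule L2_fast_Cauchy_AE_convergent[where s="\<lambda>i. s (r i)", OF s less_imp_le[OF fast]])
  then have lim: "AE \<omega> in M. (\<lambda>i. s (r i) \<omega>) \<longlonglongrightarrow> lim (\<lambda>i. s (r i) \<omega>)"
    by (simp add: convergent_LIMSEQ_iff)
  moreover have "(\<lambda>\<omega>. lim (\<lambda>i. s (r i) \<omega>)) \<in> borel_measurable M"
    using L2_measurable[OF s] by measurable
  ultimately show ?thesis
    using that[OF _ r lim] L2_tendsto_of_Cauchy_AE_subseq[where s=s, OF s Cauchy r] by blast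
qed

section \<open>Weak limits of bounded sequences\<close>

definition convex_tail :: "(nat \<Rightarrow> 'w \<Rightarrow> real) \<Rightarrow> nat \<Rightarrow> ('w \<Rightarrow> real) \<Rightarrow> bool" where
  "convex_tail u n z \<longleftrightarrow> (\<exists>N c. (\<forall>k. 0 \<le> c k) \<and> (\<forall>k. k < n \<or> N \<le> k \<longrightarrow> c k = 0)
      \<and> sum c {..<N} = 1 \<and> z = (\<lambda>\<omega>. \<Sum>k<N. c k * u k \<omega>))"

lemma convex_tail_self: "convex_tail u n (u n)"
  unfolding convex_tail_def
  by (rule exI[of _ "Suc n"], rule exI[of _ "\<lambda>k. if k = n then 1 else 0"])
     (auto simp: if_distrib cong: if_cong)

lemma convex_tail_mono: "convex_tail u m z \<Longrightarrow> n \<le> m \<Longrightarrow> convex_tail u n z"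
  unfolding convex_tail_def by (blast intro: order_less_le_trans)

lemma convex_tail_midpoint:
  assumes "convex_tail u n z" "convex_tail u n y"
  shows "convex_tail u n (\<lambda>\<omega>. (z \<omega> + y \<omega>) / 2)"
proof -
  obtain N c where c: "\<forall>k. 0 \<le> c k" "\<forall>k. k < n \<or> N \<le> k \<longrightarrow> c k = 0" "sum c {..<N} = 1"
    and z: "z = (\<lambda>\<omega>. \<Sum>k<N. c k * u k \<omega>)"
    using assms(1) unfolding convex_tail_def by blast
  obtain N' c' where c': "\<forall>k. 0 \<le> c' k" "\<forall>k. k < n \<or> N' \<le> k \<longrightarrow> c' k = 0" "sum c' {..<N'} = 1"
    and y: "y = (\<lambda>\<omega>. \<Sum>k<N'. c' k * u k \<omega>)"
    using assms(2) unfolding convex_tail_def by blast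
  define K where "K = max N N'"
  have extend: "(\<Sum>k<K. f k) = (\<Sum>k<L. f k)" if "L \<le> K" "\<And>k. L \<le> k \<Longrightarrow> f k = 0"
    for L and f :: "nat \<Rightarrow> real"
    using that by (intro sum.mono_neutral_right) auto
  have "(\<Sum>k<K. c k * u k \<omega>) = z \<omega>" "(\<Sum>k<K. c' k * u k \<omega>) = y \<omega>" for \<omega>
    unfolding z y by (rule extend; use c(2) c'(2) in \<open>simp add: K_def\<close>)+
  moreover have "sum c {..<K} = 1" "sum c' {..<K} = 1"
    by (subst extend; use c c' in \<open>simp add: K_def\<close>)+
  ultimately show ?thesis
    unfolding convex_tail_def using c c'
    by (intro exI[of _ K] exI[of _ "\<lambda>k. (c k + c' k) / 2"])
       (auto simp: K_def sum.distrib algebra_simps simp flip: sum_divide_distrib)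
qed

lemma convex_tail_L2:
  assumes "\<And>k. u k \<in> L2 M" and "convex_tail u n z"
  shows "z \<in> L2 M"
  using assms(2) unfolding convex_tail_def by (auto intro!: L2_sum L2_cmult assms(1))

lemma convex_tail_nonneg:
  assumes "\<And>k. AE \<omega> in M. u k \<omega> \<ge> 0" and "convex_tail u n z"
  shows "AE \<omega> in M. z \<omega> \<ge> 0"
proof -
  have "AE \<omega> in M. \<forall>k. u k \<omega> \<ge> 0" using assms(1) by (simp add: AE_all_countable)
  then show ?thesis
    using assms(2) unfolding convex_tail_def by (auto elim!: eventually_mono intro!: sum_nonneg)
qed

lemma convex_tail_L2inner_close:
  assumes u: "\<And>k. u k \<in> L2 M" and a: "a \<in> L2 M" and z: "convex_tail u n z"
    and close: "\<And>k. k \<ge> n \<Longrightarrow> \<bar>L2inner M (u k) a - l\<bar> \<le> \<epsilon>"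
  shows "\<bar>L2inner M z a - l\<bar> \<le> \<epsilon>"
proof -
  obtain N c where c: "\<forall>k. 0 \<le> c k" "\<forall>k. k < n \<or> N \<le> k \<longrightarrow> c k = 0" "sum c {..<N} = 1"
    and zz: "z = (\<lambda>\<omega>. \<Sum>k<N. c k * u k \<omega>)"
    using z unfolding convex_tail_def by blast
  have "L2inner M z a - l = (\<Sum>k<N. c k * (L2inner M (u k) a - l))"
    using L2inner_sum_left[OF u a] c(3)
    by (simp add: zz right_diff_distrib sum_subtractf flip: sum_distrib_right)
  also have "\<bar>\<dots>\<bar> \<le> (\<Sum>k<N. c k * \<epsilon>)"
  proof (rule order_trans[OF sum_abs sum_mono])
    fix k
    show "\<bar>c k * (L2inner M (u k) a - l)\<bar> \<le> c k * \<epsilon>"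
      using c(1,2) close[of k] by (cases "k < n") (auto simp: abs_mult mult_left_mono)
  qed
  also have "\<dots> = \<epsilon>" using c(3) by (simp flip: sum_distrib_right)
  finally show ?thesis .
qed

definition tail_inf_sqnorm :: "'w measure \<Rightarrow> (nat \<Rightarrow> 'w \<Rightarrow> real) \<Rightarrow> nat \<Rightarrow> real" where
  "tail_inf_sqnorm M u n = (INF z \<in> Collect (convex_tail u n). L2sqnorm M z)"

lemma bdd_below_L2sqnorm: "bdd_below (L2sqnorm M ` A)"
  by (rule bdd_belowI2[where m=0]) (simp add: L2sqnorm_nonneg)

lemma tail_inf_sqnorm_le: "convex_tail u n z \<Longrightarrow> tail_inf_sqnorm M u n \<le> L2sqnorm M z"
  unfolding tail_inf_sqnorm_def by (intro cINF_lower bdd_below_L2sqnorm) simp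

lemma tail_inf_sqnorm_approx:
  assumes "\<delta> > 0"
  obtains z where "convex_tail u n z" "L2sqnorm M z < tail_inf_sqnorm M u n + \<delta>"
proof -
  have ne: "Collect (convex_tail u n) \<noteq> {}" using convex_tail_self by blast
  have "(INF z \<in> Collect (convex_tail u n). L2sqnorm M z) < tail_inf_sqnorm M u n + \<delta>"
    using assms by (simp add: tail_inf_sqnorm_def)
  then have "\<exists>z \<in> Collect (convex_tail u n). L2sqnorm M z < tail_inf_sqnorm M u n + \<delta>"
    by (subst (asm) cINF_less_iff[OF ne bdd_below_L2sqnorm])
  with that show ?thesis by blast
qed

lemma convergent_tail_inf_sqnorm:
  assumes bounded: "\<And>k. L2sqnorm M (u k) \<le> B"
  shows "convergent (tail_inf_sqnorm M u)"
proof -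
  have "incseq (tail_inf_sqnorm M u)"
  proof (rule monoI)
    fix n m :: nat assume "n \<le> m"
    then have "Collect (convex_tail u m) \<subseteq> Collect (convex_tail u n)"
      using convex_tail_mono by blast
    moreover have "Collect (convex_tail u m) \<noteq> {}" using convex_tail_self by blast
    ultimately show "tail_inf_sqnorm M u n \<le> tail_inf_sqnorm M u m"
      unfolding tail_inf_sqnorm_def by (intro cINF_superset_mono bdd_below_L2sqnorm) auto
  qed
  moreover have "\<forall>n. tail_inf_sqnorm M u n \<le> B"
    using tail_inf_sqnorm_le[OF convex_tail_self] bounded order_trans by blast
  ultimately obtain L where "tail_inf_sqnorm M u \<longlonglongrightarrow> L" by (rule incseq_convergent)
  then show ?thesis by (rule convergentI)
qed

lemma convex_tail_diff_le:
  assumes u: "\<And>k. u k \<in> L2 M" and z: "convex_tail u n z" and y: "convex_tail u m y" and "n \<le> m"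
  shows "L2sqnorm M (\<lambda>\<omega>. z \<omega> - y \<omega>) \<le> 2 * L2sqnorm M z + 2 * L2sqnorm M y - 4 * tail_inf_sqnorm M u n"
proof -
  have "convex_tail u n (\<lambda>\<omega>. (z \<omega> + y \<omega>) / 2)"
    using z convex_tail_mono[OF y \<open>n \<le> m\<close>] by (rule convex_tail_midpoint)
  then have "tail_inf_sqnorm M u n \<le> L2sqnorm M (\<lambda>\<omega>. (z \<omega> + y \<omega>) / 2)" by (rule tail_inf_sqnorm_le)
  then show ?thesis
    using L2sqnorm_parallelogram[OF convex_tail_L2[OF u z] convex_tail_L2[OF u y]] by linarith
qed

lemma convex_tail_minimizers_Cauchy:
  assumes u: "\<And>k. u k \<in> L2 M" and bounded: "\<And>k. L2sqnorm M (u k) \<le> B"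
  obtains \<nu> where "\<And>n. convex_tail u n (\<nu> n)"
    "\<And>\<epsilon>. \<epsilon> > 0 \<Longrightarrow> \<exists>N. \<forall>n\<ge>N. \<forall>m\<ge>N. L2sqnorm M (\<lambda>\<omega>. \<nu> n \<omega> - \<nu> m \<omega>) < \<epsilon>"
proof -
  define D where "D = tail_inf_sqnorm M u"
  have "Cauchy D" unfolding D_def using convergent_tail_inf_sqnorm[OF bounded] by (rule convergent_Cauchy)
  define \<delta> where "\<delta> n = inverse (real (Suc n))" for n
  have \<delta>_antimono: "\<delta> m \<le> \<delta> n" if "n \<le> m" for n m
    using that by (simp add: \<delta>_def le_imp_inverse_le)
  have "\<exists>z. convex_tail u n z \<and> L2sqnorm M z < D n + \<delta> n" for n
    by (rule tail_inf_sqnorm_approx[of "\<delta> n"]) (auto simp: \<delta>_def D_def)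
  then obtain \<nu> where \<nu>: "\<And>n. convex_tail u n (\<nu> n)"
    and \<nu>_almost_min: "\<And>n. L2sqnorm M (\<nu> n) < D n + \<delta> n"
    by metis
  have gap: "L2sqnorm M (\<lambda>\<omega>. \<nu> n \<omega> - \<nu> m \<omega>) \<le> 2 * \<bar>D m - D n\<bar> + 4 * \<delta> n"
    if "n \<le> m" for n m
    using convex_tail_diff_le[OF u \<nu> \<nu> that] \<nu>_almost_min[of n] \<nu>_almost_min[of m]
      \<delta>_antimono[OF that] abs_ge_self[of "D m - D n"]
    unfolding D_def by argo
  show ?thesis
  proof (rule that[OF \<nu>])
    fix \<epsilon> :: real assume "\<epsilon> > 0"
    then obtain N1 where N1: "\<And>m n. m \<ge> N1 \<Longrightarrow> n \<ge> N1 \<Longrightarrow> \<bar>D m - D n\<bar> < \<epsilon> / 4"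
      using CauchyD[OF \<open>Cauchy D\<close>, of "\<epsilon> / 4"] by auto
    obtain N2 where N2: "\<delta> N2 < \<epsilon> / 8"
      using \<open>\<epsilon> > 0\<close> reals_Archimedean[of "\<epsilon> / 8"] by (auto simp: \<delta>_def)
    have close: "L2sqnorm M (\<lambda>\<omega>. \<nu> n \<omega> - \<nu> m \<omega>) < \<epsilon>" if "n \<le> m" "n \<ge> max N1 N2" for n m
      using gap[OF that(1)] N1[of m n] N2 \<delta>_antimono[of N2 n] that by simp
    have "L2sqnorm M (\<lambda>\<omega>. \<nu> n \<omega> - \<nu> m \<omega>) < \<epsilon>" if "n \<ge> max N1 N2" "m \<ge> max N1 N2" for n m
      using that close[of n m] close[of m n] L2sqnorm_diff_commute[of M "\<nu> n" "\<nu> m"]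
      by (cases "n \<le> m") simp_all
    then show "\<exists>N. \<forall>n\<ge>N. \<forall>m\<ge>N. L2sqnorm M (\<lambda>\<omega>. \<nu> n \<omega> - \<nu> m \<omega>) < \<epsilon>" by blast
  qed
qed

lemma convex_tail_L2inner_tendsto:
  assumes u: "\<And>k. u k \<in> L2 M" and a: "a \<in> L2 M" and \<nu>: "\<And>n. convex_tail u n (\<nu> n)"
    and lim: "(\<lambda>k. L2inner M (u k) a) \<longlonglongrightarrow> l"
  shows "(\<lambda>n. L2inner M (\<nu> n) a) \<longlonglongrightarrow> l"
proof (rule LIMSEQ_I)
  fix \<epsilon> :: real assume "\<epsilon> > 0"
  then have "\<epsilon> / 2 > 0" by simp
  from LIMSEQ_D[OF lim this] obtain K where K: "\<And>k. k \<ge> K \<Longrightarrow> \<bar>L2inner M (u k) a - l\<bar> < \<epsilon> / 2"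
    by auto
  have half: "\<bar>L2inner M (\<nu> n) a - l\<bar> \<le> \<epsilon> / 2" if "n \<ge> K" for n
  proof (rule convex_tail_L2inner_close[OF u a \<nu>])
    fix k assume "k \<ge> n"
    then show "\<bar>L2inner M (u k) a - l\<bar> \<le> \<epsilon> / 2" using K[of k] that by simp
  qed
  have "norm (L2inner M (\<nu> n) a - l) < \<epsilon>" if "n \<ge> K" for n
    using half[OF that] \<open>\<epsilon> > 0\<close> by simp
  then show "\<exists>K. \<forall>n\<ge>K. norm (L2inner M (\<nu> n) a - l) < \<epsilon>" by blast
qed

lemma L2inner_tendsto:
  assumes s: "\<And>n. s n \<in> L2 M" and v: "v \<in> L2 M" and a: "a \<in> L2 M"
    and lim: "(\<lambda>n. L2sqnorm M (\<lambda>\<omega>. s n \<omega> - v \<omega>)) \<longlonglongrightarrow> 0"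
  shows "(\<lambda>n. L2inner M (s n) a) \<longlonglongrightarrow> L2inner M v a"
proof -
  have bound: "\<bar>L2inner M (s n) a - L2inner M v a\<bar> \<le> L2norm M (\<lambda>\<omega>. s n \<omega> - v \<omega>) * L2norm M a"
    for n
    using L2inner_abs_le[OF L2_diff[OF s v] a] by (simp add: L2inner_diff_left[OF s v a])
  have "(\<lambda>n. L2norm M (\<lambda>\<omega>. s n \<omega> - v \<omega>) * L2norm M a) \<longlonglongrightarrow> 0"
    using tendsto_real_sqrt[OF lim] by (simp add: L2norm_eq_sqrt tendsto_mult_left_zero)
  then have "(\<lambda>n. L2inner M (s n) a - L2inner M v a) \<longlonglongrightarrow> 0"
    by (rule Lim_null_comparison[OF always_eventually, rotated]) (simp add: bound)
  then show ?thesis by (simp add: LIM_zero_iff)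
qed

lemma L2_weak_limit:
  assumes u: "\<And>k. u k \<in> L2 M" and nonneg: "\<And>k. AE \<omega> in M. u k \<omega> \<ge> 0"
    and bounded: "\<And>k. L2sqnorm M (u k) \<le> B"
  obtains v where "v \<in> L2 M" "AE \<omega> in M. v \<omega> \<ge> 0"
    "\<And>a l. a \<in> L2 M \<Longrightarrow> (\<lambda>k. L2inner M (u k) a) \<longlonglongrightarrow> l \<Longrightarrow> L2inner M v a = l"
proof -
  obtain \<nu> where \<nu>: "\<And>n. convex_tail u n (\<nu> n)"
    and Cauchy: "\<And>\<epsilon>. \<epsilon> > 0 \<Longrightarrow> \<exists>N. \<forall>n\<ge>N. \<forall>m\<ge>N. L2sqnorm M (\<lambda>\<omega>. \<nu> n \<omega> - \<nu> m \<omega>) < \<epsilon>"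
    using convex_tail_minimizers_Cauchy[where u=u, OF u bounded] by metis
  have \<nu>_L2: "\<nu> n \<in> L2 M" for n by (rule convex_tail_L2[OF u \<nu>])
  obtain v r where v: "v \<in> L2 M" and "strict_mono r"
    and ae_lim: "AE \<omega> in M. (\<lambda>i. \<nu> (r i) \<omega>) \<longlonglongrightarrow> v \<omega>"
    and lim: "(\<lambda>n. L2sqnorm M (\<lambda>\<omega>. \<nu> n \<omega> - v \<omega>)) \<longlonglongrightarrow> 0"
    by (rule L2_complete[OF \<nu>_L2 Cauchy])
  have "AE \<omega> in M. \<forall>n. \<nu> n \<omega> \<ge> 0"
    using convex_tail_nonneg[OF nonneg \<nu>] by (simp add: AE_all_countable)
  with ae_lim have v_nonneg: "AE \<omega> in M. v \<omega> \<ge> 0"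
  proof eventually_elim
    case (elim \<omega>)
    then show ?case by (intro LIMSEQ_le_const[OF elim(1)]) auto
  qed
  have "L2inner M v a = l" if "a \<in> L2 M" "(\<lambda>k. L2inner M (u k) a) \<longlonglongrightarrow> l" for a l
    using L2inner_tendsto[OF \<nu>_L2 v that(1) lim] convex_tail_L2inner_tendsto[OF u that(1) \<nu> that(2)]
    by (rule LIMSEQ_unique)
  with v v_nonneg show ?thesis by (rule that)
qed

section \<open>The penalty update\<close>

lemma penalty_pos:
  fixes \<rho> :: "nat \<Rightarrow> real"
  assumes "\<rho> 0 > 0" "\<gamma> > 1" and step: "\<And>k. \<rho> (Suc k) = \<rho> k \<or> \<rho> (Suc k) = \<gamma> * \<rho> k"
  shows "\<rho> k > 0"
proof (induction k)
  case (Suc k)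
  then show ?case using step[of k] \<open>\<gamma> > 1\<close> by auto
qed (use \<open>\<rho> 0 > 0\<close> in simp)

lemma penalty_eventually_constant:
  fixes \<rho> :: "nat \<Rightarrow> real"
  assumes pos: "\<rho> 0 > 0" and \<gamma>: "\<gamma> > 1" and step: "\<And>k. \<rho> (Suc k) = \<rho> k \<or> \<rho> (Suc k) = \<gamma> * \<rho> k"
    and bdd: "bdd_above (range \<rho>)"
  shows "\<exists>K. \<forall>k\<ge>K. \<rho> (Suc k) = \<rho> k"
proof (rule ccontr)
  assume "\<not> ?thesis"
  then have increase: "\<exists>k\<ge>K. \<rho> (Suc k) = \<gamma> * \<rho> k" for K using step by blast
  have "\<rho> k \<le> \<rho> (Suc k)" for k
    using step[of k] penalty_pos[OF pos \<gamma> step, of k] \<gamma> by (auto simp: mult_le_cancel_right1)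
  then have "incseq \<rho>" by (rule incseq_SucI)
  have unbounded: "\<exists>k. \<rho> k \<ge> \<rho> 0 * \<gamma> ^ n" for n
  proof (induction n)
    case (Suc n)
    then obtain k where k: "\<rho> k \<ge> \<rho> 0 * \<gamma> ^ n" by blast
    obtain k' where "k' \<ge> k" and k': "\<rho> (Suc k') = \<gamma> * \<rho> k'" using increase by blast
    then have "\<rho> k' \<ge> \<rho> 0 * \<gamma> ^ n" using k \<open>incseq \<rho>\<close> by (auto simp: incseq_def intro: order_trans)
    then have "\<rho> (Suc k') \<ge> \<rho> 0 * \<gamma> ^ Suc n" using k' \<gamma> by (simp add: mult.left_commute)
    then show ?case by blast
  qed auto
  obtain R where R: "\<And>k. \<rho> k \<le> R" using bdd by (auto simp: bdd_above_def)
  obtain n where "R / \<rho> 0 < \<gamma> ^ n" using real_arch_pow[OF \<gamma>] by blast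
  then have "R < \<rho> 0 * \<gamma> ^ n" using pos by (simp add: divide_less_eq mult.commute)
  moreover obtain k where "\<rho> k \<ge> \<rho> 0 * \<gamma> ^ n" using unbounded by blast
  ultimately show False using R[of k] by linarith
qed

lemma eventually_contracting_tendsto_zero:
  fixes m :: "nat \<Rightarrow> real"
  assumes contract: "\<And>k. k \<ge> K \<Longrightarrow> m (Suc k) \<le> \<tau> * m k" and "0 \<le> \<tau>" "\<tau> < 1"
    and nonneg: "\<And>k. m k \<ge> 0"
  shows "m \<longlonglongrightarrow> 0"
proof -
  have geometric: "m (j + K) \<le> \<tau> ^ j * m K" for j
  proof (induction j)
    case (Suc j)
    have "m (Suc j + K) \<le> \<tau> * m (j + K)" using contract[of "j + K"] by simp
    also have "\<dots> \<le> \<tau> * (\<tau> ^ j * m K)" using Suc \<open>0 \<le> \<tau>\<close> by (rule mult_left_mono)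
    finally show ?case by (simp add: mult.assoc)
  qed simp
  have "(\<lambda>j. \<tau> ^ j * m K) \<longlonglongrightarrow> 0"
    using assms(2,3) by (intro tendsto_mult_left_zero LIMSEQ_power_zero) simp
  then have "(\<lambda>j. m (j + K)) \<longlonglongrightarrow> 0"
    by (rule Lim_null_comparison[OF always_eventually, rotated]) (simp add: geometric nonneg)
  then show ?thesis by (rule LIMSEQ_offset)
qed

lemma penalty_residual_tendsto_zero:
  fixes \<rho> m :: "nat \<Rightarrow> real"
  assumes pos: "\<rho> 0 > 0" and \<gamma>: "\<gamma> > 1" and \<tau>: "0 \<le> \<tau>" "\<tau> < 1" and nonneg: "\<And>k. m k \<ge> 0"
    and update: "\<And>k. \<rho> (Suc k) = (if k = 0 \<or> m k \<le> \<tau> * m (k - 1) then \<rho> k else \<gamma> * \<rho> k)"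
    and bdd: "bdd_above (range \<rho>)"
  shows "m \<longlonglongrightarrow> 0"
proof -
  have step: "\<rho> (Suc k) = \<rho> k \<or> \<rho> (Suc k) = \<gamma> * \<rho> k" for k
    using update[of k] by simp
  obtain K where K: "\<And>k. k \<ge> K \<Longrightarrow> \<rho> (Suc k) = \<rho> k"
    using penalty_eventually_constant[OF pos \<gamma> step bdd] by blast
  have "m (Suc k) \<le> \<tau> * m k" if "k \<ge> K" for k
    using update[of "Suc k"] K[of "Suc k"] that \<gamma> penalty_pos[OF pos \<gamma> step, of "Suc k"]
    by (auto split: if_splits)
  then show ?thesis using \<tau> nonneg by (rule eventually_contracting_tendsto_zero)
qed

section \<open>Approximate KKT points\<close>

lemma power2_max_0_le:
  fixes w W \<rho> R G :: real
  assumes "0 \<le> w" "w \<le> W" "0 < \<rho>" "\<rho> \<le> R"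
  shows "(max (w + \<rho> * G) 0)\<^sup>2 \<le> 2 * W\<^sup>2 + 2 * R\<^sup>2 * G\<^sup>2"
proof -
  have "\<rho> * G \<le> \<rho> * \<bar>G\<bar>" using assms by (simp add: mult_left_mono)
  also have "\<dots> \<le> R * \<bar>G\<bar>" using assms by (simp add: mult_right_mono)
  finally have "\<rho> * G \<le> R * \<bar>G\<bar>" .
  then have "max (w + \<rho> * G) 0 \<le> W + R * \<bar>G\<bar>" using assms by auto
  then have "(max (w + \<rho> * G) 0)\<^sup>2 \<le> (W + R * \<bar>G\<bar>)\<^sup>2" by (simp add: power_mono)
  also have "\<dots> \<le> 2 * W\<^sup>2 + 2 * R\<^sup>2 * G\<^sup>2"
    using sum_squares_bound[of W "R * \<bar>G\<bar>"] by (simp add: power2_sum power_mult_distrib ac_simps)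
  finally show ?thesis .
qed

lemma abs_max_0_le_abs_min:
  fixes w \<rho> G :: real
  assumes "0 \<le> w" "0 < \<rho>"
  shows "\<bar>max G 0\<bar> \<le> \<bar>min (- G) (w / \<rho>)\<bar>"
  using assms by (auto simp: min_def max_def)

lemma abs_max_0_mult_le:
  fixes w \<rho> G :: real
  assumes "0 \<le> w" "0 < \<rho>"
  shows "\<bar>max (w + \<rho> * G) 0 * G\<bar> \<le> max (w + \<rho> * G) 0 * \<bar>min (- G) (w / \<rho>)\<bar>"
proof (cases "w + \<rho> * G > 0")
  case True
  then have "min (- G) (w / \<rho>) = - G" using assms by (simp add: field_simps)
  then show ?thesis using True by (simp add: abs_mult)
qed simp

context
  fixes M :: "'w measure" and e :: "'y::real_normed_vector \<Rightarrow> 'w \<Rightarrow> real"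
  assumes emb: "dense_L2_embedding M e"
begin

lemma emb_L2: "e y \<in> L2 M"
  using emb by (simp add: dense_L2_embedding_def)

lemma L2norm_emb_diff: "L2norm M (\<lambda>\<omega>. e y1 \<omega> - e y2 \<omega>) = L2norm M (e (y1 - y2))"
proof -
  have "\<forall>a b y1 y2. AE \<omega> in M. e (a *\<^sub>R y1 + b *\<^sub>R y2) \<omega> = a * e y1 \<omega> + b * e y2 \<omega>"
    using emb by (simp add: dense_L2_embedding_def)
  then have "AE \<omega> in M. e (1 *\<^sub>R y1 + (-1) *\<^sub>R y2) \<omega> = 1 * e y1 \<omega> + (-1) * e y2 \<omega>"
    by blast
  then have "AE \<omega> in M. (e y1 \<omega> - e y2 \<omega>)\<^sup>2 = (e (y1 - y2) \<omega>)\<^sup>2"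
    by eventually_elim simp
  then have "(\<integral>\<omega>. (e y1 \<omega> - e y2 \<omega>)\<^sup>2 \<partial>M) = (\<integral>\<omega>. (e (y1 - y2) \<omega>)\<^sup>2 \<partial>M)"
    using L2_measurable[OF emb_L2] by (intro integral_cong_AE) simp_all
  then show ?thesis unfolding L2norm_def by simp
qed

lemma emb_bounded:
  obtains C where "C \<ge> 0" "\<And>y. L2norm M (e y) \<le> C * norm y"
    "\<And>y1 y2. L2norm M (\<lambda>\<omega>. e y1 \<omega> - e y2 \<omega>) \<le> C * norm (y1 - y2)"
proof -
  have "\<exists>C. \<forall>y. L2norm M (e y) \<le> C * norm y"
    using emb by (simp add: dense_L2_embedding_def)
  then obtain C where C: "\<And>y. L2norm M (e y) \<le> C * norm y" by blast
  have C': "L2norm M (e y) \<le> max C 0 * norm y" for y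
    using C[of y] mult_right_mono[OF max.cobounded1[of C 0] norm_ge_zero[of y]] by linarith
  show ?thesis
  proof (rule that[OF _ C'])
    show "L2norm M (\<lambda>\<omega>. e y1 \<omega> - e y2 \<omega>) \<le> max C 0 * norm (y1 - y2)" for y1 y2
      unfolding L2norm_emb_diff by (rule C')
  qed simp
qed

lemma L2inner_emb_tendsto:
  assumes u: "\<And>k. u k \<in> L2 M" and bounded: "\<And>k. L2norm M (u k) \<le> b" and y: "y \<longlonglongrightarrow> y0"
  shows "(\<lambda>k. L2inner M (u k) (e (y k)) - L2inner M (u k) (e y0)) \<longlonglongrightarrow> 0"
proof -
  obtain C where "C \<ge> 0" and "\<And>y. L2norm M (e y) \<le> C * norm y"
    and Lip: "\<And>y1 y2. L2norm M (\<lambda>\<omega>. e y1 \<omega> - e y2 \<omega>) \<le> C * norm (y1 - y2)"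
    using emb_bounded by metis
  have bound: "\<bar>L2inner M (u k) (e (y k)) - L2inner M (u k) (e y0)\<bar> \<le> b * (C * norm (y k - y0))" for k
  proof -
    have "\<bar>L2inner M (u k) (e (y k)) - L2inner M (u k) (e y0)\<bar>
        \<le> L2norm M (u k) * L2norm M (\<lambda>\<omega>. e (y k) \<omega> - e y0 \<omega>)"
      using L2inner_abs_le[OF u L2_diff[OF emb_L2 emb_L2]]
      by (simp add: L2inner_diff_right[OF u emb_L2 emb_L2])
    also have "\<dots> \<le> b * (C * norm (y k - y0))"
      using bounded[of k] Lip[of "y k" y0] L2norm_nonneg[of M "u k"] L2norm_nonneg[of M "\<lambda>\<omega>. e (y k) \<omega> - e y0 \<omega>"]
      by (intro mult_mono) auto
    finally show ?thesis .
  qed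
  have "(\<lambda>k. b * (C * norm (y k - y0))) \<longlonglongrightarrow> 0"
    using y by (intro tendsto_mult_right_zero tendsto_norm_zero) (simp add: LIM_zero)
  then show ?thesis
    by (rule Lim_null_comparison[OF always_eventually, rotated]) (simp add: bound)
qed

lemma AE_emb_nonpos_of_tendsto:
  assumes y: "y \<longlonglongrightarrow> y0" and pos: "(\<lambda>k. L2sqnorm M (\<lambda>\<omega>. max (e (y k) \<omega>) 0)) \<longlonglongrightarrow> 0"
  shows "AE \<omega> in M. e y0 \<omega> \<le> 0"
proof -
  obtain C where "C \<ge> 0" and "\<And>y. L2norm M (e y) \<le> C * norm y"
    and Lip: "\<And>y1 y2. L2norm M (\<lambda>\<omega>. e y1 \<omega> - e y2 \<omega>) \<le> C * norm (y1 - y2)"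
    using emb_bounded by metis
  note [measurable] = L2_measurable[OF emb_L2]
  have bound: "L2sqnorm M (\<lambda>\<omega>. max (e y0 \<omega>) 0)
      \<le> 2 * L2sqnorm M (\<lambda>\<omega>. max (e (y k) \<omega>) 0) + 2 * (C * norm (y k - y0))\<^sup>2" for k
  proof -
    have "L2sqnorm M (\<lambda>\<omega>. max (e y0 \<omega>) 0)
        \<le> 2 * L2sqnorm M (\<lambda>\<omega>. max (e (y k) \<omega>) 0) + 2 * L2sqnorm M (\<lambda>\<omega>. e (y k) \<omega> - e y0 \<omega>)"
    proof (rule L2sqnorm_le_sum)
      show "(\<lambda>\<omega>. max (e y0 \<omega>) 0) \<in> borel_measurable M" by measurable
      show "(\<lambda>\<omega>. max (e (y k) \<omega>) 0) \<in> L2 M" by (rule L2_max_0[OF emb_L2])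
      show "(\<lambda>\<omega>. e (y k) \<omega> - e y0 \<omega>) \<in> L2 M" by (rule L2_diff[OF emb_L2 emb_L2])
      show "AE \<omega> in M. \<bar>max (e y0 \<omega>) 0\<bar> \<le> \<bar>max (e (y k) \<omega>) 0\<bar> + \<bar>e (y k) \<omega> - e y0 \<omega>\<bar>"
        by (intro AE_I2) (simp add: max_def abs_if)
    qed
    moreover have "L2sqnorm M (\<lambda>\<omega>. e (y k) \<omega> - e y0 \<omega>) \<le> (C * norm (y k - y0))\<^sup>2"
      using power_mono[OF Lip L2norm_nonneg, of "y k" y0 2] by (simp add: power2_L2norm)
    ultimately show ?thesis by linarith
  qed
  have "(\<lambda>k. norm (y k - y0)) \<longlonglongrightarrow> 0" by (rule tendsto_norm_zero[OF LIM_zero[OF y]])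
  then have "(\<lambda>k. 2 * L2sqnorm M (\<lambda>\<omega>. max (e (y k) \<omega>) 0) + 2 * (C * norm (y k - y0))\<^sup>2)
      \<longlonglongrightarrow> 2 * 0 + 2 * (C * 0)\<^sup>2"
    by (intro tendsto_intros pos)
  then have lim: "(\<lambda>k. 2 * L2sqnorm M (\<lambda>\<omega>. max (e (y k) \<omega>) 0) + 2 * (C * norm (y k - y0))\<^sup>2)
      \<longlonglongrightarrow> 0"
    by simp
  have "L2sqnorm M (\<lambda>\<omega>. max (e y0 \<omega>) 0) \<le> 0"
    by (rule LIMSEQ_le_const[OF lim]) (use bound in blast)
  then have "AE \<omega> in M. max (e y0 \<omega>) 0 = 0"
    by (rule AE_zero_of_L2sqnorm_le_0[OF L2_max_0[OF emb_L2]])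
  then show ?thesis by eventually_elim (simp add: max_def split: if_splits)
qed

end

definition KKT_multiplier ::
  "'w measure \<Rightarrow> ('y::real_normed_vector \<Rightarrow> 'w \<Rightarrow> real) \<Rightarrow> ('x::real_normed_vector \<Rightarrow> ('x \<Rightarrow>\<^sub>L real))
    \<Rightarrow> ('x \<Rightarrow> 'y) \<Rightarrow> ('x \<Rightarrow> ('x \<Rightarrow>\<^sub>L 'y)) \<Rightarrow> 'x \<Rightarrow> ('w \<Rightarrow> real) \<Rightarrow> bool" where
  "KKT_multiplier M e f' g g' x \<mu> \<longleftrightarrow> \<mu> \<in> L2 M \<and> (AE \<omega> in M. \<mu> \<omega> \<ge> 0)
     \<and> (\<forall>d. blinfun_apply (f' x) d + L2inner M \<mu> (e (blinfun_apply (g' x) d)) = 0)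
     \<and> (AE \<omega> in M. e (g x) \<omega> \<le> 0) \<and> L2inner M \<mu> (e (g x)) = 0"

lemma KKT_multiplier_of_asymptotic_KKT:
  assumes emb: "dense_L2_embedding M e"
    and cont: "isCont f' xbar" "isCont g xbar" "isCont g' xbar" and xs: "xs \<longlonglongrightarrow> xbar"
    and u: "\<And>k. u k \<in> L2 M" "\<And>k. AE \<omega> in M. u k \<omega> \<ge> 0" "\<And>k. L2sqnorm M (u k) \<le> B"
    and stationary: "\<And>d. (\<lambda>k. blinfun_apply (f' (xs k)) d
        + L2inner M (u k) (e (blinfun_apply (g' (xs k)) d))) \<longlonglongrightarrow> 0"
    and feasible: "(\<lambda>k. L2sqnorm M (\<lambda>\<omega>. max (e (g (xs k)) \<omega>) 0)) \<longlonglongrightarrow> 0"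
    and complementary: "(\<lambda>k. L2inner M (u k) (e (g (xs k)))) \<longlonglongrightarrow> 0"
  shows "\<exists>\<mu>. KKT_multiplier M e f' g g' xbar \<mu>"
proof -
  obtain \<mu> where \<mu>: "\<mu> \<in> L2 M" "AE \<omega> in M. \<mu> \<omega> \<ge> 0"
    and weak: "\<And>a l. a \<in> L2 M \<Longrightarrow> (\<lambda>k. L2inner M (u k) a) \<longlonglongrightarrow> l \<Longrightarrow> L2inner M \<mu> a = l"
    using L2_weak_limit[where u=u, OF u] by metis
  have u_norm: "L2norm M (u k) \<le> sqrt B" for k using u(3) by (simp add: L2norm_eq_sqrt)
  note inner_emb = L2inner_emb_tendsto[OF emb, where u=u, OF u(1) u_norm]
  have "L2inner M \<mu> (e (blinfun_apply (g' xbar) d)) = - blinfun_apply (f' xbar) d" for d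
  proof (rule weak[OF emb_L2[OF emb]])
    have "(\<lambda>k. blinfun_apply (g' (xs k)) d) \<longlonglongrightarrow> blinfun_apply (g' xbar) d"
      by (rule blinfun.tendsto[OF isCont_tendsto_compose[OF cont(3) xs] tendsto_const])
    moreover have "(\<lambda>k. blinfun_apply (f' (xs k)) d) \<longlonglongrightarrow> blinfun_apply (f' xbar) d"
      by (rule blinfun.tendsto[OF isCont_tendsto_compose[OF cont(1) xs] tendsto_const])
    ultimately have "(\<lambda>k. (blinfun_apply (f' (xs k)) d + L2inner M (u k) (e (blinfun_apply (g' (xs k)) d)))
        - blinfun_apply (f' (xs k)) d - (L2inner M (u k) (e (blinfun_apply (g' (xs k)) d))
        - L2inner M (u k) (e (blinfun_apply (g' xbar) d)))) \<longlonglongrightarrow> 0 - blinfun_apply (f' xbar) d - 0"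
      by (intro tendsto_diff stationary inner_emb)
    then show "(\<lambda>k. L2inner M (u k) (e (blinfun_apply (g' xbar) d))) \<longlonglongrightarrow> - blinfun_apply (f' xbar) d"
      by simp
  qed
  moreover have "L2inner M \<mu> (e (g xbar)) = 0"
  proof (rule weak[OF emb_L2[OF emb]])
    have "(\<lambda>k. L2inner M (u k) (e (g (xs k)))
        - (L2inner M (u k) (e (g (xs k))) - L2inner M (u k) (e (g xbar)))) \<longlonglongrightarrow> 0 - 0"
      by (intro tendsto_diff complementary inner_emb isCont_tendsto_compose[OF cont(2) xs])
    then show "(\<lambda>k. L2inner M (u k) (e (g xbar))) \<longlonglongrightarrow> 0" by simp
  qed
  moreover have "AE \<omega> in M. e (g xbar) \<omega> \<le> 0"
    by (rule AE_emb_nonpos_of_tendsto[OF emb isCont_tendsto_compose[OF cont(2) xs] feasible])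
  ultimately show ?thesis unfolding KKT_multiplier_def using \<mu> by auto
qed

lemma abs_le_onorm_mult_norm:
  fixes F :: "'a::real_normed_vector \<Rightarrow> real"
  assumes bound: "\<And>d. \<bar>F d\<bar> \<le> K * norm d"
  shows "\<bar>F d\<bar> \<le> onorm F * norm d"
proof (cases "d = 0")
  case True
  then show ?thesis using bound[of d] by simp
next
  case False
  have "bdd_above (range (\<lambda>x. norm (F x) / norm x))"
  proof (rule bdd_aboveI2)
    fix x
    have "norm (F x) / norm x \<le> K" if "x \<noteq> 0" using bound[of x] that by (simp add: divide_le_eq)
    then show "norm (F x) / norm x \<le> max K 0" by (cases "x = 0") auto
  qed
  then have "norm (F d) / norm d \<le> onorm F" unfolding onorm_def by (rule cSUP_upper[OF UNIV_I])
  then show ?thesis using False by (simp add: divide_le_eq)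
qed

lemma tendsto_zero_of_onorm_tendsto_zero:
  fixes F :: "nat \<Rightarrow> 'a::real_normed_vector \<Rightarrow> real"
  assumes bounded: "\<And>k. \<exists>K. \<forall>d. \<bar>F k d\<bar> \<le> K * norm d" and lim: "(\<lambda>k. onorm (F k)) \<longlonglongrightarrow> 0"
  shows "(\<lambda>k. F k d) \<longlonglongrightarrow> 0"
proof -
  have bound: "\<bar>F k d\<bar> \<le> onorm (F k) * norm d" for k
    using bounded[of k] abs_le_onorm_mult_norm by blast
  have "(\<lambda>k. onorm (F k) * norm d) \<longlonglongrightarrow> 0" by (rule tendsto_mult_left_zero[OF lim])
  then show ?thesis
    by (rule Lim_null_comparison[OF always_eventually, rotated]) (simp add: bound)
qed

lemma L2sqnorm_multiplier_le:
  assumes w: "w \<in> L2 M" and wmax: "wmax \<in> L2 M" and G: "G \<in> L2 M"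
    and w_bounds: "AE \<omega> in M. 0 \<le> w \<omega> \<and> w \<omega> \<le> wmax \<omega>" and \<rho>: "0 < \<rho>" "\<rho> \<le> R"
  shows "L2sqnorm M (\<lambda>\<omega>. max (w \<omega> + \<rho> * G \<omega>) 0) \<le> 2 * L2sqnorm M wmax + 2 * R\<^sup>2 * L2sqnorm M G"
proof -
  have "L2sqnorm M (\<lambda>\<omega>. max (w \<omega> + \<rho> * G \<omega>) 0) \<le> (\<integral>\<omega>. 2 * (wmax \<omega>)\<^sup>2 + 2 * R\<^sup>2 * (G \<omega>)\<^sup>2 \<partial>M)"
    unfolding L2sqnorm_def
  proof (rule integral_mono_AE)
    show "integrable M (\<lambda>\<omega>. (max (w \<omega> + \<rho> * G \<omega>) 0)\<^sup>2)"
      by (intro L2_integrable_power2 L2_max_0 L2_add w L2_cmult G)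
    show "integrable M (\<lambda>\<omega>. 2 * (wmax \<omega>)\<^sup>2 + 2 * R\<^sup>2 * (G \<omega>)\<^sup>2)"
      using L2_integrable_power2[OF wmax] L2_integrable_power2[OF G] by simp
    show "AE \<omega> in M. (max (w \<omega> + \<rho> * G \<omega>) 0)\<^sup>2 \<le> 2 * (wmax \<omega>)\<^sup>2 + 2 * R\<^sup>2 * (G \<omega>)\<^sup>2"
      using w_bounds by eventually_elim (use \<rho> in \<open>auto intro: power2_max_0_le\<close>)
  qed
  also have "\<dots> = 2 * L2sqnorm M wmax + 2 * R\<^sup>2 * L2sqnorm M G"
    unfolding L2sqnorm_def using L2_integrable_power2[OF wmax] L2_integrable_power2[OF G] by simp
  finally show ?thesis .
qed

lemma L2sqnorm_max_0_le_residual: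
  assumes G: "G \<in> L2 M" and w: "w \<in> L2 M" and w_nonneg: "AE \<omega> in M. 0 \<le> w \<omega>" and \<rho>: "0 < \<rho>"
  shows "L2sqnorm M (\<lambda>\<omega>. max (G \<omega>) 0) \<le> (L2norm M (\<lambda>\<omega>. min (- G \<omega>) (w \<omega> / \<rho>)))\<^sup>2"
proof -
  have "(\<lambda>\<omega>. min (- G \<omega>) (w \<omega> / \<rho>)) \<in> L2 M" by (intro L2_min L2_uminus G L2_divide w)
  moreover have "(\<lambda>\<omega>. max (G \<omega>) 0) \<in> borel_measurable M" using L2_measurable[OF G] by measurable
  moreover have "AE \<omega> in M. \<bar>max (G \<omega>) 0\<bar> \<le> \<bar>min (- G \<omega>) (w \<omega> / \<rho>)\<bar>"
    using w_nonneg by eventually_elim (rule abs_max_0_le_abs_min[OF _ \<rho>])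
  ultimately show ?thesis unfolding power2_L2norm by (rule L2_dominated(2))
qed

lemma L2inner_multiplier_le_residual:
  assumes G: "G \<in> L2 M" and w: "w \<in> L2 M" and w_nonneg: "AE \<omega> in M. 0 \<le> w \<omega>" and \<rho>: "0 < \<rho>"
  defines "u \<equiv> \<lambda>\<omega>. max (w \<omega> + \<rho> * G \<omega>) 0"
  shows "\<bar>L2inner M u G\<bar> \<le> L2norm M u * L2norm M (\<lambda>\<omega>. min (- G \<omega>) (w \<omega> / \<rho>))"
proof -
  define r where "r \<omega> = \<bar>min (- G \<omega>) (w \<omega> / \<rho>)\<bar>" for \<omega>
  have u: "u \<in> L2 M" unfolding u_def by (intro L2_max_0 L2_add w L2_cmult G)
  have r: "r \<in> L2 M" unfolding r_def by (intro L2_abs L2_min L2_uminus G L2_divide w)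
  have "\<bar>L2inner M u G\<bar> \<le> (\<integral>\<omega>. \<bar>u \<omega> * G \<omega>\<bar> \<partial>M)"
    unfolding L2inner_def by (rule integral_abs_bound)
  also have "\<dots> \<le> L2inner M u r"
    unfolding L2inner_def
  proof (rule integral_mono_AE)
    show "integrable M (\<lambda>\<omega>. \<bar>u \<omega> * G \<omega>\<bar>)" using integrable_L2_mult[OF u G] by simp
    show "integrable M (\<lambda>\<omega>. u \<omega> * r \<omega>)" by (rule integrable_L2_mult[OF u r])
    show "AE \<omega> in M. \<bar>u \<omega> * G \<omega>\<bar> \<le> u \<omega> * r \<omega>"
      using w_nonneg by eventually_elim (use \<rho> in \<open>simp add: u_def r_def abs_max_0_mult_le\<close>)
  qed
  also have "\<dots> \<le> L2norm M u * L2norm M r" using L2inner_abs_le[OF u r] by linarith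
  also have "L2norm M r = L2norm M (\<lambda>\<omega>. min (- G \<omega>) (w \<omega> / \<rho>))" by (simp add: L2norm_def r_def)
  finally show ?thesis .
qed

lemma C1_Frechet_isCont:
  assumes "C1_Frechet F F'"
  shows "isCont F x" "isCont F' x"
  using assms has_derivative_continuous continuous_on_eq_continuous_at[OF open_UNIV]
  unfolding C1_Frechet_def by blast+

lemma AL_deriv_bounded:
  assumes emb: "dense_L2_embedding M e" and lam: "lam \<in> L2 M"
  shows "\<exists>K. \<forall>d. \<bar>AL_deriv M e f' g g' \<rho> x lam d\<bar> \<le> K * norm d"
proof -
  obtain C where "C \<ge> 0" and C: "\<And>y. L2norm M (e y) \<le> C * norm y"
    and "\<And>y1 y2. L2norm M (\<lambda>\<omega>. e y1 \<omega> - e y2 \<omega>) \<le> C * norm (y1 - y2)"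
    using emb_bounded[OF emb] by metis
  define u where "u = (\<lambda>\<omega>. max (lam \<omega> + \<rho> * e (g x) \<omega>) 0)"
  have u: "u \<in> L2 M" unfolding u_def by (intro L2_max_0 L2_add lam L2_cmult emb_L2[OF emb])
  have inner_bound:
    "\<bar>L2inner M u (e (blinfun_apply (g' x) d))\<bar> \<le> L2norm M u * (C * (norm (g' x) * norm d))" for d
  proof -
    have "\<bar>L2inner M u (e (blinfun_apply (g' x) d))\<bar> \<le> L2norm M u * L2norm M (e (blinfun_apply (g' x) d))"
      by (rule L2inner_abs_le[OF u emb_L2[OF emb]])
    also have "\<dots> \<le> L2norm M u * (C * (norm (g' x) * norm d))"
      by (intro mult_left_mono[OF order_trans[OF C] L2norm_nonneg] mult_left_mono[OF norm_blinfun \<open>C \<ge> 0\<close>])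
    finally show ?thesis .
  qed
  have "\<bar>AL_deriv M e f' g g' \<rho> x lam d\<bar> \<le> (norm (f' x) + L2norm M u * C * norm (g' x)) * norm d" for d
  proof -
    have "\<bar>AL_deriv M e f' g g' \<rho> x lam d\<bar>
        \<le> \<bar>blinfun_apply (f' x) d\<bar> + \<bar>L2inner M u (e (blinfun_apply (g' x) d))\<bar>"
      unfolding AL_deriv_def u_def by (rule abs_triangle_ineq)
    also have "\<dots> \<le> norm (f' x) * norm d + L2norm M u * (C * (norm (g' x) * norm d))"
      using norm_blinfun[of "f' x" d] inner_bound[of d] by (intro add_mono) auto
    finally show ?thesis by (simp add: algebra_simps)
  qed
  then show ?thesis by blast
qed

lemma strict_mono_limit_point_Suc:
  assumes s: "strict_mono s" and lim: "(x \<circ> s) \<longlonglongrightarrow> l"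
  obtains j where "strict_mono j" "(\<lambda>k. x (Suc (j k))) \<longlonglongrightarrow> l"
proof
  define j where "j k = s (Suc k) - 1" for k
  have Suc_j: "Suc (j k) = s (Suc k)" for k
    using strict_mono_imp_increasing[OF s, of "Suc k"] by (simp add: j_def)
  show "strict_mono j"
  proof (rule strict_mono_Suc_iff[THEN iffD2], intro allI)
    fix k
    have "s (Suc k) < s (Suc (Suc k))" using s by (simp add: strict_mono_Suc_iff)
    then show "j k < j (Suc k)" by (simp flip: Suc_j)
  qed
  show "(\<lambda>k. x (Suc (j k))) \<longlonglongrightarrow> l"
    using LIMSEQ_Suc[OF lim] by (simp add: Suc_j o_def)
qed

lemma AL_multipliers_bounded:
  assumes emb: "dense_L2_embedding M e" and wmax: "wmax \<in> L2 M" and w: "\<And>k. w k \<in> L2 M"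
    and w_bounds: "\<And>k. AE \<omega> in M. 0 \<le> w k \<omega> \<and> w k \<omega> \<le> wmax \<omega>"
    and \<rho>: "\<And>k. 0 < \<rho> k" "\<And>k. \<rho> k \<le> R" and y: "Bseq y"
  shows "\<exists>B. \<forall>k. L2sqnorm M (\<lambda>\<omega>. max (w k \<omega> + \<rho> k * e (y k) \<omega>) 0) \<le> B"
proof -
  obtain C where "C \<ge> 0" and C: "\<And>y. L2norm M (e y) \<le> C * norm y"
    and "\<And>y1 y2. L2norm M (\<lambda>\<omega>. e y1 \<omega> - e y2 \<omega>) \<le> C * norm (y1 - y2)"
    using emb_bounded[OF emb] by metis
  obtain N where N: "\<And>k. norm (y k) \<le> N" using y by (auto simp: Bseq_def)
  have "L2sqnorm M (\<lambda>\<omega>. max (w k \<omega> + \<rho> k * e (y k) \<omega>) 0) \<le> 2 * L2sqnorm M wmax + 2 * R\<^sup>2 * (C * N)\<^sup>2"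
    for k
  proof -
    have "L2norm M (e (y k)) \<le> C * N"
      using C[of "y k"] mult_left_mono[OF N[of k] \<open>C \<ge> 0\<close>] by linarith
    then have "L2sqnorm M (e (y k)) \<le> (C * N)\<^sup>2"
      unfolding power2_L2norm[symmetric] by (rule power_mono[OF _ L2norm_nonneg])
    then have "2 * R\<^sup>2 * L2sqnorm M (e (y k)) \<le> 2 * R\<^sup>2 * (C * N)\<^sup>2"
      by (intro mult_left_mono) simp_all
    then show ?thesis
      using L2sqnorm_multiplier_le[OF w[of k] wmax emb_L2[OF emb, of "y k"] w_bounds[of k] \<rho>(1)[of k] \<rho>(2)[of k]]
      by linarith
  qed
  then show ?thesis by blast
qed

lemma AL_subsequence_KKT:
  assumes emb: "dense_L2_embedding M e" and f_C1: "C1_Frechet f f'" and g_C1: "C1_Frechet g g'"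
    and xs: "xs \<longlonglongrightarrow> xbar"
    and wmax: "wmax \<in> L2 M" and w: "\<And>k. w k \<in> L2 M"
    and w_bounds: "\<And>k. AE \<omega> in M. 0 \<le> w k \<omega> \<and> w k \<omega> \<le> wmax \<omega>"
    and \<rho>: "\<And>k. 0 < \<rho> k" "\<And>k. \<rho> k \<le> R"
    and stationarity: "(\<lambda>k. onorm (AL_deriv M e f' g g' (\<rho> k) (xs k) (w k))) \<longlonglongrightarrow> 0"
    and residual: "(\<lambda>k. L2norm M (\<lambda>\<omega>. min (- e (g (xs k)) \<omega>) (w k \<omega> / \<rho> k))) \<longlonglongrightarrow> 0"
  shows "\<exists>\<mu>. KKT_multiplier M e f' g g' xbar \<mu>"
proof -
  \<comment> \<open>the multiplier estimates lambda^{k+1} of (S.3)\<close>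
  define u where "u k = (\<lambda>\<omega>. max (w k \<omega> + \<rho> k * e (g (xs k)) \<omega>) 0)" for k
  have u: "u k \<in> L2 M" for k unfolding u_def by (intro L2_max_0 L2_add w L2_cmult emb_L2[OF emb])
  have w_nonneg: "AE \<omega> in M. 0 \<le> w k \<omega>" for k using w_bounds[of k] by eventually_elim simp
  have "(\<lambda>k. g (xs k)) \<longlonglongrightarrow> g xbar" by (rule isCont_tendsto_compose[OF C1_Frechet_isCont(1)[OF g_C1] xs])
  then have "Bseq (\<lambda>k. g (xs k))" by (rule convergent_imp_Bseq[OF convergentI])
  from AL_multipliers_bounded[where w=w and \<rho>=\<rho>, OF emb wmax w w_bounds \<rho> this]
  obtain B where u_bounded: "\<And>k. L2sqnorm M (u k) \<le> B"
    unfolding u_def by blast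
  show ?thesis
  proof (rule KKT_multiplier_of_asymptotic_KKT[OF emb _ _ _ xs u _ u_bounded])
    show "isCont f' xbar" "isCont g xbar" "isCont g' xbar"
      using C1_Frechet_isCont f_C1 g_C1 by blast+
    show "AE \<omega> in M. u k \<omega> \<ge> 0" for k by (simp add: u_def)
    show "(\<lambda>k. blinfun_apply (f' (xs k)) d + L2inner M (u k) (e (blinfun_apply (g' (xs k)) d)))
        \<longlonglongrightarrow> 0" for d
      using tendsto_zero_of_onorm_tendsto_zero[where F="\<lambda>k. AL_deriv M e f' g g' (\<rho> k) (xs k) (w k)",
          OF AL_deriv_bounded[OF emb w] stationarity]
      by (simp add: AL_deriv_def u_def)
    have "(\<lambda>k. (L2norm M (\<lambda>\<omega>. min (- e (g (xs k)) \<omega>) (w k \<omega> / \<rho> k)))\<^sup>2) \<longlonglongrightarrow> 0"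
      using tendsto_power[OF residual, of 2] by simp
    then show "(\<lambda>k. L2sqnorm M (\<lambda>\<omega>. max (e (g (xs k)) \<omega>) 0)) \<longlonglongrightarrow> 0"
      by (rule Lim_null_comparison[OF always_eventually, rotated])
        (simp add: L2sqnorm_nonneg L2sqnorm_max_0_le_residual[OF emb_L2[OF emb] w w_nonneg \<rho>(1)])
    have u_norm: "L2norm M (u k) \<le> sqrt B" for k using u_bounded[of k] by (simp add: L2norm_eq_sqrt)
    have complementarity_bound: "\<bar>L2inner M (u k) (e (g (xs k)))\<bar>
        \<le> sqrt B * L2norm M (\<lambda>\<omega>. min (- e (g (xs k)) \<omega>) (w k \<omega> / \<rho> k))" for k
    proof -
      have "\<bar>L2inner M (u k) (e (g (xs k)))\<bar>
          \<le> L2norm M (u k) * L2norm M (\<lambda>\<omega>. min (- e (g (xs k)) \<omega>) (w k \<omega> / \<rho> k))"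
        using L2inner_multiplier_le_residual[OF emb_L2[OF emb] w[of k] w_nonneg[of k] \<rho>(1)[of k]]
        by (simp add: u_def)
      also have "\<dots> \<le> sqrt B * L2norm M (\<lambda>\<omega>. min (- e (g (xs k)) \<omega>) (w k \<omega> / \<rho> k))"
        by (rule mult_right_mono[OF u_norm L2norm_nonneg])
      finally show ?thesis .
    qed
    have "(\<lambda>k. sqrt B * L2norm M (\<lambda>\<omega>. min (- e (g (xs k)) \<omega>) (w k \<omega> / \<rho> k))) \<longlonglongrightarrow> 0"
      by (rule tendsto_mult_right_zero[OF residual])
    then show "(\<lambda>k. L2inner M (u k) (e (g (xs k)))) \<longlonglongrightarrow> 0"
      by (rule Lim_null_comparison[OF always_eventually, rotated]) (simp add: complementarity_bound)
  qed
qed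

theorem theorem6p3:
  fixes M :: "'w measure"
    and e :: "'y::banach \<Rightarrow> ('w \<Rightarrow> real)"
    and f :: "'x::banach \<Rightarrow> real" and f' :: "'x \<Rightarrow> ('x \<Rightarrow>\<^sub>L real)"
    and g :: "'x \<Rightarrow> 'y" and g' :: "'x \<Rightarrow> ('x \<Rightarrow>\<^sub>L 'y)"
    and x :: "nat \<Rightarrow> 'x" and lam :: "nat \<Rightarrow> ('w \<Rightarrow> real)" and w :: "nat \<Rightarrow> ('w \<Rightarrow> real)"
    and \<rho> :: "nat \<Rightarrow> real" and wmax :: "'w \<Rightarrow> real" and \<gamma> \<tau> :: real
    and xbar :: 'x
  assumes emb: "dense_L2_embedding M e"
    and f_C1: "C1_Frechet f f'"
    and g_C1: "C1_Frechet g g'"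
    \<comment> \<open>(S.0)\<close>
    and lam0: "lam 0 \<in> L2 M"
    and rho0: "\<rho> 0 > 0"
    and wmax_L2: "wmax \<in> L2 M" and wmax_nonneg: "AE \<omega> in M. wmax \<omega> \<ge> 0"
    and gamma: "\<gamma> > 1" and tau: "0 < \<tau>" "\<tau> < 1"
    \<comment> \<open>(S.2)\<close>
    and w_L2: "\<And>k. w k \<in> L2 M"
    and w_bounds: "\<And>k. AE \<omega> in M. 0 \<le> w k \<omega> \<and> w k \<omega> \<le> wmax \<omega>"
    and stationarity: "(\<lambda>k. onorm (AL_deriv M e f' g g' (\<rho> k) (x (Suc k)) (w k))) \<longlonglongrightarrow> 0"
    \<comment> \<open>(S.3)\<close>
    and lam_update: "\<And>k. lam (Suc k) = (\<lambda>\<omega>. max (w k \<omega> + \<rho> k * e (g (x (Suc k))) \<omega>) 0)"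
    and rho_update: "\<And>k. \<rho> (Suc k) =
        (if k = 0 \<or>
            L2norm M (\<lambda>\<omega>. min (- e (g (x (Suc k))) \<omega>) (w k \<omega> / \<rho> k))
              \<le> \<tau> * L2norm M (\<lambda>\<omega>. min (- e (g (x k)) \<omega>) (w (k - 1) \<omega> / \<rho> (k - 1)))
         then \<rho> k else \<gamma> * \<rho> k)"
    \<comment> \<open>bounded penalty parameters\<close>
    and rho_bdd: "bdd_above (range \<rho>)"
    \<comment> \<open>xbar is a (strong) limit point of (x^k)\<close>
    and limpt: "\<exists>s. strict_mono s \<and> (x \<circ> s) \<longlonglongrightarrow> xbar"
  shows "\<exists>\<mu>. \<mu> \<in> L2 M \<and> (AE \<omega> in M. \<mu> \<omega> \<ge> 0)
           \<and> (\<forall>d. blinfun_apply (f' xbar) d + L2inner M \<mu> (e (blinfun_apply (g' xbar) d)) = 0)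
           \<and> (AE \<omega> in M. e (g xbar) \<omega> \<le> 0)
           \<and> L2inner M \<mu> (e (g xbar)) = 0"
proof -
  have step: "\<rho> (Suc k) = \<rho> k \<or> \<rho> (Suc k) = \<gamma> * \<rho> k" for k
    using rho_update[of k] by simp
  have \<rho>_pos: "\<rho> k > 0" for k by (rule penalty_pos[OF rho0 gamma step])
  obtain R where R: "\<And>k. \<rho> k \<le> R" using rho_bdd by (auto simp: bdd_above_def)
  define m where "m k = L2norm M (\<lambda>\<omega>. min (- e (g (x (Suc k))) \<omega>) (w k \<omega> / \<rho> k))" for k
  have update: "\<rho> (Suc k) = (if k = 0 \<or> m k \<le> \<tau> * m (k - 1) then \<rho> k else \<gamma> * \<rho> k)" for k
    using rho_update[of k] by (cases k) (simp_all add: m_def)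
  have "m \<longlonglongrightarrow> 0"
    by (rule penalty_residual_tendsto_zero[where \<rho>=\<rho>, OF rho0 gamma less_imp_le[OF tau(1)] tau(2) _ update rho_bdd])
      (simp add: m_def L2norm_nonneg)
  obtain s where "strict_mono s" "(x \<circ> s) \<longlonglongrightarrow> xbar" using limpt by blast
  then obtain j where j: "strict_mono j" and xj: "(\<lambda>k. x (Suc (j k))) \<longlonglongrightarrow> xbar"
    by (rule strict_mono_limit_point_Suc)
  have "\<exists>\<mu>. KKT_multiplier M e f' g g' xbar \<mu>"
  proof (rule AL_subsequence_KKT[OF emb f_C1 g_C1 xj wmax_L2 w_L2 w_bounds \<rho>_pos R])
    show "(\<lambda>k. onorm (AL_deriv M e f' g g' (\<rho> (j k)) (x (Suc (j k))) (w (j k)))) \<longlonglongrightarrow> 0"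
      using LIMSEQ_subseq_LIMSEQ[OF stationarity j] by (simp add: o_def)
    show "(\<lambda>k. L2norm M (\<lambda>\<omega>. min (- e (g (x (Suc (j k)))) \<omega>) (w (j k) \<omega> / \<rho> (j k)))) \<longlonglongrightarrow> 0"
      using LIMSEQ_subseq_LIMSEQ[OF \<open>m \<longlonglongrightarrow> 0\<close> j] by (simp add: o_def m_def)
  qed
  then show ?thesis unfolding KKT_multiplier_def .
qed

end
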